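(* Let $G_n=K_n$ be the complete graph on $n$ vertices and let $\lambda_n,\gamma_n>0$ with $\lambda_n\to\infty$, $\gamma_n\to\infty$; let $T_n$ be the end of epidemic time on $K_n$ with walking rate $\lambda_n$ and recovery rate $\gamma_n$. Then: (i) if $\lambda_n/(n\gamma_n)\to\infty$, then $\frac{n\gamma_n^2}{\lambda_n}T_n\xrightarrow{D}\mathrm{Exp}(1)$; (ii) if $\lambda_n/\gamma_n\to 0$, then $2\lambda_nT_n\xrightarrow{D}\mathrm{Exp}(1)$; (iii) if $\lambda_n/\gamma_n\to\infty$ and $\lambda_n/(n\gamma_n)\to 0$, then $\gamma_nT_n\xrightarrow{D}X+Y$, where $X\sim\mathrm{Exp}(1)$ and $Y\sim\mathrm{Exp}(2)$ are independent.
   Context: Model on a finite connected undirected graph $G$: two agents perform independent continuous-time simple random walks, each holding at a vertex for an $\mathrm{Exp}(\lambda)$ time and then jumping to a uniformly chosen neighbour. Each agent is susceptible ($S$) or infected ($I$); whenever they occupy the same vertex and at least one is infected, both become infected immediately; each infected agent independently recovers after an $\mathrm{Exp}(\gamma)$ time. Initially both are infected at the same vertex. The end of epidemic time is $T=\inf\{t\ge0:\text{both agents are in } S\}$. $\mathrm{Exp}(\mu)$ denotes the exponential distribution with rate $\mu$. *)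

theory Defs
  imports "HOL-Probability.Probability"
begin

text \<open>State of the two-agent system: (position of agent 1, position of agent 2,
  agent 1 infected?, agent 2 infected?).  True means infected (I), False susceptible (S).\<close>
type_synonym state = "nat \<times> nat \<times> bool \<times> bool"

definition states :: "nat set \<Rightarrow> state set" where
  "states V = V \<times> V \<times> (UNIV :: bool set) \<times> (UNIV :: bool set)"

definition move1 :: "state \<Rightarrow> nat \<Rightarrow> state" where
  "move1 x w = (case x of (u, v, a, b) \<Rightarrow>
     (if w = v \<and> (a \<or> b) then (w, v, True, True) else (w, v, a, b)))"

definition move2 :: "state \<Rightarrow> nat \<Rightarrow> state" where
  "move2 x w = (case x of (u, v, a, b) \<Rightarrow>
     (if u = w \<and> (a \<or> b) then (u, w, True, True) else (u, w, a, b)))"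

definition rec1 :: "state \<Rightarrow> state" where
  "rec1 x = (case x of (u, v, a, b) \<Rightarrow>
     (if u = v \<and> b then (u, v, True, b) else (u, v, False, b)))"

definition rec2 :: "state \<Rightarrow> state" where
  "rec2 x = (case x of (u, v, a, b) \<Rightarrow>
     (if u = v \<and> a then (u, v, a, True) else (u, v, a, False)))"

definition rate_to :: "(nat \<Rightarrow> nat set) \<Rightarrow> real \<Rightarrow> real \<Rightarrow> state \<Rightarrow> state \<Rightarrow> real" where
  "rate_to nbr lam gam x y = (case x of (u, v, a, b) \<Rightarrow>
      (\<Sum>w\<in>nbr u. lam / real (card (nbr u)) * of_bool (y = move1 x w))
    + (\<Sum>w\<in>nbr v. lam / real (card (nbr v)) * of_bool (y = move2 x w))
    + (if a then gam * of_bool (y = rec1 x) else 0)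
    + (if b then gam * of_bool (y = rec2 x) else 0))"

definition generator :: "nat set \<Rightarrow> (nat \<Rightarrow> nat set) \<Rightarrow> real \<Rightarrow> real \<Rightarrow> state \<Rightarrow> state \<Rightarrow> real" where
  "generator V nbr lam gam x y =
     rate_to nbr lam gam x y - (if x = y then (\<Sum>z\<in>states V. rate_to nbr lam gam x z) else 0)"

fun mpow :: "'s set \<Rightarrow> ('s \<Rightarrow> 's \<Rightarrow> real) \<Rightarrow> nat \<Rightarrow> 's \<Rightarrow> 's \<Rightarrow> real" where
  "mpow S Q 0 x y = of_bool (x = y)"
| "mpow S Q (Suc k) x y = (\<Sum>z\<in>S. Q x z * mpow S Q k z y)"

definition trans_prob :: "nat set \<Rightarrow> (nat \<Rightarrow> nat set) \<Rightarrow> real \<Rightarrow> real \<Rightarrow> real \<Rightarrow> state \<Rightarrow> state \<Rightarrow> real" where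
  "trans_prob V nbr lam gam t x y =
     (\<Sum>k. t ^ k / fact k * mpow (states V) (generator V nbr lam gam) k x y)"

definition both_susceptible :: "state \<Rightarrow> bool" where
  "both_susceptible x = (case x of (u, v, a, b) \<Rightarrow> \<not> a \<and> \<not> b)"

text \<open>Distribution function t \<mapsto> P(T \<le> t) of the end of epidemic time T started from x0.
  Since the set of states with both agents susceptible is absorbing,
  P(T \<le> t) = P(X_t has both agents susceptible).\<close>
definition end_time_cdf :: "nat set \<Rightarrow> (nat \<Rightarrow> nat set) \<Rightarrow> real \<Rightarrow> real \<Rightarrow> state \<Rightarrow> real \<Rightarrow> real" where
  "end_time_cdf V nbr lam gam x0 t =
     (if t < 0 then 0 else
        (\<Sum>y\<in>{y\<in>states V. both_susceptible y}. trans_prob V nbr lam gam t x0 y))"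

definition Kn_nbr :: "nat \<Rightarrow> nat \<Rightarrow> nat set" where
  "Kn_nbr n u = {..<n} - {u}"

end

theory Submission
  imports Defs
begin

(* On K_n all vertices look alike, so the two-agent chain lumps exactly into four classes: both
   agents susceptible (absorbing), co-located (hence both infected), apart with both infected, and
   apart with one infected. Let a = 2 lam (separation rate), b = 2 lam / (n - 1) (meeting rate)
   and g = gam. Computing the powers of the generator on the indicator of absorption class by class
   shows that, when the characteristic polynomial char_poly a b g of the transient lumped rates has
   distinct roots r1, r2, r3, P(T > t) = hypoexp_surv r1 r2 r3 t: T is distributed like a sum of
   independent exponentials with rates r1, r2, r3.
   In each regime the roots lie near three well separated scales, where the intermediate value
   theorem applied to the rescaled cubic locates them. After division by the time scale of the
   theorem, the rates that tend to infinity drop out of hypoexp_surv, leaving Exp(1) in regimes (i)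
   and (ii) and Exp(1) + Exp(2) in regime (iii). *)

section \<open>Distribution functions of the limit laws\<close>

lemma cdf_exponential:
  assumes "0 < l"
  shows "cdf (density lborel (exponential_density l)) t = (if t < 0 then 0 else 1 - exp (- l * t))"
  using emeasure_erlang_density[OF assms, of 0 t] assms
  unfolding cdf_def measure_def by (simp add: erlang_CDF_0)

lemma emeasure_exponential_convolution_atMost:
  assumes "0 < l" "0 < m"
  shows "emeasure (density lborel (exponential_density l) \<star> density lborel (exponential_density m)) {..t}
    = \<integral>\<^sup>+x. ennreal (exponential_density l x) * ennreal (erlang_CDF 0 m (t - x)) \<partial>lborel"
proof -
  let ?M = "density lborel (exponential_density l)" and ?N = "density lborel (exponential_density m)"
  have "finite_measure ?M" "finite_measure ?N"
    using prob_space_exponential_density assms by (simp_all add: prob_space_def)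
  then have "emeasure (?M \<star> ?N) {..t} = \<integral>\<^sup>+x. emeasure ?N {y. y + x \<in> {..t}} \<partial>?M"
    by (intro convolution_emeasure) auto
  also have "\<dots> = \<integral>\<^sup>+x. ennreal (erlang_CDF 0 m (t - x)) \<partial>?M"
  proof (intro nn_integral_cong)
    fix x :: real
    have "{y. y + x \<in> {..t}} = {..t - x}" by auto
    then show "emeasure ?N {y. y + x \<in> {..t}} = ennreal (erlang_CDF 0 m (t - x))"
      by (simp add: emeasure_erlang_density assms)
  qed
  also have "\<dots> = \<integral>\<^sup>+x. ennreal (exponential_density l x) * ennreal (erlang_CDF 0 m (t - x)) \<partial>lborel"
    by (subst nn_integral_density) (auto simp: exponential_density_def erlang_CDF_def)
  finally show ?thesis .
qed

lemma nn_integral_exponential_convolution: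
  assumes l: "0 < l" and m: "0 < m" and lm: "l \<noteq> m" and t: "0 \<le> t"
  shows "(\<integral>\<^sup>+x. ennreal (exponential_density l x) * ennreal (erlang_CDF 0 m (t - x)) \<partial>lborel)
      = ennreal (1 - (m * exp (- l * t) - l * exp (- m * t)) / (m - l))"
    and "0 \<le> 1 - (m * exp (- l * t) - l * exp (- m * t)) / (m - l)"
proof -
  let ?f = "\<lambda>x. l * exp (- l * x) - l * exp ((m - l) * x - m * t)"
  let ?F = "\<lambda>x. - exp (- l * x) - l / (m - l) * exp ((m - l) * x - m * t)"
  have F': "DERIV ?F x :> ?f x" for x
    by (rule derivative_eq_intros refl)+ (use lm in \<open>simp add: field_simps\<close>)
  have f_nonneg: "0 \<le> ?f x" if "x \<le> t" for x
  proof -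
    have "exp ((m - l) * x - m * t) \<le> exp (- l * x)"
      using that m by (simp add: algebra_simps mult_left_mono)
    then show ?thesis using l by (simp add: mult_left_mono algebra_simps)
  qed
  have F_diff: "?F t - ?F 0 = 1 - (m * exp (- l * t) - l * exp (- m * t)) / (m - l)"
  proof -
    have "m - l \<noteq> 0" using lm by simp
    then have "(m * exp (- l * t) - l * exp (- m * t)) / (m - l)
        = exp (- l * t) + l / (m - l) * (exp (- l * t) - exp (- m * t))"
      by (simp add: field_simps)
    then show ?thesis by (simp add: algebra_simps)
  qed
  have "?F 0 \<le> ?F t"
  proof (rule DERIV_nonneg_imp_nondecreasing[of 0 t ?F])
    fix x assume "0 \<le> x" "x \<le> t"
    then show "\<exists>y. DERIV ?F x :> y \<and> 0 \<le> y" using F' f_nonneg by blast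
  qed (use t in simp)
  then show "0 \<le> 1 - (m * exp (- l * t) - l * exp (- m * t)) / (m - l)"
    using F_diff by simp
  have "(\<integral>\<^sup>+x. ennreal (exponential_density l x) * ennreal (erlang_CDF 0 m (t - x)) \<partial>lborel)
      = \<integral>\<^sup>+x. ennreal (?f x) * indicator {0..t} x \<partial>lborel"
  proof (intro nn_integral_cong)
    fix x :: real
    have "exp (- l * x) * exp (- m * (t - x)) = exp ((m - l) * x - m * t)"
      by (simp add: algebra_simps flip: exp_add)
    then have "l * exp (- l * x) * (1 - exp (- m * (t - x))) = ?f x"
      by (simp add: algebra_simps)
    then show "ennreal (exponential_density l x) * ennreal (erlang_CDF 0 m (t - x))
        = ennreal (?f x) * indicator {0..t} x"
      using l by (cases "0 \<le> x \<and> x \<le> t")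
        (auto simp: exponential_density_def erlang_CDF_def mult.commute simp flip: ennreal_mult')
  qed
  also have "\<dots> = ennreal (?F t - ?F 0)"
    using t F' f_nonneg by (intro nn_integral_FTC_Icc) auto
  finally show "(\<integral>\<^sup>+x. ennreal (exponential_density l x) * ennreal (erlang_CDF 0 m (t - x)) \<partial>lborel)
      = ennreal (1 - (m * exp (- l * t) - l * exp (- m * t)) / (m - l))"
    by (simp only: F_diff)
qed

lemma cdf_exponential_convolution:
  assumes l: "0 < l" and m: "0 < m" and lm: "l \<noteq> m"
  shows "cdf (density lborel (exponential_density l) \<star> density lborel (exponential_density m)) t
     = (if t < 0 then 0 else 1 - (m * exp (- l * t) - l * exp (- m * t)) / (m - l))"
proof (cases "t < 0")
  case True
  have "(\<integral>\<^sup>+x. ennreal (exponential_density l x) * ennreal (erlang_CDF 0 m (t - x)) \<partial>lborel)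
      = \<integral>\<^sup>+x. 0 \<partial>(lborel :: real measure)"
    using True by (intro nn_integral_cong) (auto simp: exponential_density_def erlang_CDF_def)
  then show ?thesis
    using True emeasure_exponential_convolution_atMost[OF l m] unfolding cdf_def measure_def by simp
next
  case False
  then show ?thesis
    using emeasure_exponential_convolution_atMost[OF l m] nn_integral_exponential_convolution[OF l m lm]
    unfolding cdf_def measure_def by simp
qed

section \<open>The generator of the two-agent chain\<close>

lemma sum_point_mass:
  fixes f :: "'a \<Rightarrow> real"
  assumes "finite S" "y \<in> S"
  shows "(\<Sum>z\<in>S. of_bool (z = y) * f z) = f y"
proof -
  have "(\<Sum>z\<in>S. of_bool (z = y) * f z) = (\<Sum>z\<in>S. if y = z then f z else 0)"
    by (intro sum.cong) auto
  then show ?thesis using assms by simp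
qed

lemma sum_point_masses:
  fixes f :: "'a \<Rightarrow> real"
  assumes "finite S" "finite W" "m ` W \<subseteq> S"
  shows "(\<Sum>z\<in>S. (\<Sum>w\<in>W. c w * of_bool (z = m w)) * f z) = (\<Sum>w\<in>W. c w * f (m w))"
proof -
  have "(\<Sum>z\<in>S. (\<Sum>w\<in>W. c w * of_bool (z = m w)) * f z)
      = (\<Sum>w\<in>W. c w * (\<Sum>z\<in>S. of_bool (z = m w) * f z))"
    by (simp add: sum_distrib_right sum_distrib_left sum.swap[of _ S] mult.assoc)
  also have "\<dots> = (\<Sum>w\<in>W. c w * f (m w))"
    using assms by (intro sum.cong refl) (auto simp: sum_point_mass)
  finally show ?thesis .
qed

lemma sum_eq_single:
  fixes g :: "'a \<Rightarrow> 'b::comm_monoid_add"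
  assumes "finite A" "v \<in> A" "\<And>w. w \<in> A \<Longrightarrow> w \<noteq> v \<Longrightarrow> g w = 0"
  shows "(\<Sum>w\<in>A. g w) = g v"
  using assms by (subst sum.remove[of _ v]) (auto intro!: sum.neutral)

lemma finite_states: "finite V \<Longrightarrow> finite (states V)"
  by (simp add: states_def)

lemma sum_rate_to:
  fixes f :: "state \<Rightarrow> real"
  assumes V: "finite V" and nbr: "\<And>u. u \<in> V \<Longrightarrow> nbr u \<subseteq> V \<and> finite (nbr u)"
    and x: "x = (u, v, p, q)" "u \<in> V" "v \<in> V"
  shows "(\<Sum>z\<in>states V. rate_to nbr lam gam x z * f z) =
      (\<Sum>w\<in>nbr u. lam / real (card (nbr u)) * f (move1 x w))
    + (\<Sum>w\<in>nbr v. lam / real (card (nbr v)) * f (move2 x w))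
    + (if p then gam * f (rec1 x) else 0)
    + (if q then gam * f (rec2 x) else 0)"
proof -
  let ?S = "states V"
  have fin: "finite ?S" "finite (nbr u)" "finite (nbr v)"
    using V nbr x by (auto simp: finite_states)
  have targets: "move1 x ` nbr u \<subseteq> ?S" "move2 x ` nbr v \<subseteq> ?S" "rec1 x \<in> ?S" "rec2 x \<in> ?S"
    using nbr x by (auto simp: move1_def move2_def rec1_def rec2_def states_def)
  have recovery: "(\<Sum>z\<in>?S. (if r then gam * of_bool (z = y) else 0) * f z) = (if r then gam * f y else 0)"
    if "y \<in> ?S" for r y
    using sum_point_mass[OF fin(1) that, of f] by (cases r) (simp_all add: mult.assoc flip: sum_distrib_left)
  have rate: "rate_to nbr lam gam x z =
      (\<Sum>w\<in>nbr u. lam / real (card (nbr u)) * of_bool (z = move1 x w))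
    + (\<Sum>w\<in>nbr v. lam / real (card (nbr v)) * of_bool (z = move2 x w))
    + (if p then gam * of_bool (z = rec1 x) else 0)
    + (if q then gam * of_bool (z = rec2 x) else 0)" for z
    by (simp add: rate_to_def x)
  show ?thesis
    unfolding rate distrib_right sum.distrib
    by (simp only: sum_point_masses[OF fin(1,2) targets(1)] sum_point_masses[OF fin(1,3) targets(2)]
        recovery[OF targets(3)] recovery[OF targets(4)])
qed

lemma sum_generator:
  fixes f :: "state \<Rightarrow> real"
  assumes "finite V" "x \<in> states V"
  shows "(\<Sum>z\<in>states V. generator V nbr lam gam x z * f z)
       = (\<Sum>z\<in>states V. rate_to nbr lam gam x z * (f z - f x))"
proof -
  let ?S = "states V" and ?r = "rate_to nbr lam gam x"
  have "(\<Sum>z\<in>?S. generator V nbr lam gam x z * f z)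
      = (\<Sum>z\<in>?S. ?r z * f z - (if x = z then sum ?r ?S * f x else 0))"
    unfolding generator_def by (intro sum.cong) (auto simp: left_diff_distrib)
  also have "\<dots> = (\<Sum>z\<in>?S. ?r z * (f z - f x))"
    using assms by (simp add: sum_subtractf sum_distrib_right right_diff_distrib finite_states)
  finally show ?thesis .
qed

lemma card_Kn_nbr: "u < n \<Longrightarrow> card (Kn_nbr n u) = n - 1"
  by (simp add: Kn_nbr_def)

lemma sum_generator_Kn:
  fixes f :: "state \<Rightarrow> real"
  assumes x: "x = (u, v, p, q)" "u < n" "v < n"
  shows "(\<Sum>z\<in>states {..<n}. generator {..<n} (Kn_nbr n) lam gam x z * f z) =
      (\<Sum>w\<in>Kn_nbr n u. lam / real (n - 1) * (f (move1 x w) - f x))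
    + (\<Sum>w\<in>Kn_nbr n v. lam / real (n - 1) * (f (move2 x w) - f x))
    + (if p then gam * (f (rec1 x) - f x) else 0)
    + (if q then gam * (f (rec2 x) - f x) else 0)"
proof -
  have "x \<in> states {..<n}" using x by (simp add: states_def)
  then show ?thesis
    using sum_rate_to[of "{..<n}" "Kn_nbr n" x u v p q lam gam "\<lambda>z. f z - f x"] x
    by (simp add: sum_generator card_Kn_nbr Kn_nbr_def)
qed

section \<open>Lumping on the complete graph\<close>

text \<open>Meeting infects both agents instantly, so co-located agents always share their status;
  only these coherent states are reachable.\<close>

definition coherent :: "state \<Rightarrow> bool" where
  "coherent x = (case x of (u, v, p, q) \<Rightarrow> u = v \<longrightarrow> p = q)"

definition class_fun :: "real \<Rightarrow> real \<Rightarrow> real \<Rightarrow> real \<Rightarrow> state \<Rightarrow> real" where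
  "class_fun e c d2 d1 x = (case x of (u, v, p, q) \<Rightarrow>
     if \<not> p \<and> \<not> q then e else if u = v then c else if p \<and> q then d2 else d1)"

lemma generator_Kn_class_fun:
  fixes lam gam :: real
  assumes x: "x \<in> states {..<n}" "coherent x" and n: "2 \<le> n"
  defines "b \<equiv> 2 * lam / real (n - 1)"
  shows "(\<Sum>z\<in>states {..<n}. generator {..<n} (Kn_nbr n) lam gam x z * class_fun e c d2 d1 z)
    = class_fun 0 (2 * lam * (d2 - c)) (b * (c - d2) + 2 * gam * (d1 - d2)) (b * (c - d1) + gam * (e - d1)) x"
proof -
  obtain u v p q where uvpq: "x = (u, v, p, q)" "u < n" "v < n"
    using x(1) by (cases x) (auto simp: states_def)
  let ?f = "class_fun e c d2 d1"
  have n1: "real (n - 1) \<noteq> 0" using n by simp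
  note sum = sum_generator_Kn[OF uvpq, of lam gam ?f]
  have meet1: "(\<Sum>w\<in>Kn_nbr n u. lam / real (n - 1) * (?f (move1 x w) - ?f x))
      = lam / real (n - 1) * (c - ?f x)" if "u \<noteq> v" "p \<or> q"
    using that uvpq
    by (subst sum_eq_single[where v = v]) (auto simp: class_fun_def move1_def Kn_nbr_def)
  have meet2: "(\<Sum>w\<in>Kn_nbr n v. lam / real (n - 1) * (?f (move2 x w) - ?f x))
      = lam / real (n - 1) * (c - ?f x)" if "u \<noteq> v" "p \<or> q"
    using that uvpq
    by (subst sum_eq_single[where v = u]) (auto simp: class_fun_def move2_def Kn_nbr_def)
  consider (E) "\<not> p" "\<not> q" | (C) "u = v" "p" "q" | (D2) "u \<noteq> v" "p" "q" | (D1) "u \<noteq> v" "p \<noteq> q"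
    using x(2) uvpq by (auto simp: coherent_def)
  then show ?thesis
  proof cases
    case E
    then show ?thesis using sum uvpq by (simp add: class_fun_def move1_def move2_def)
  next
    case C
    have "(\<Sum>w\<in>Kn_nbr n u. lam / real (n - 1) * (?f (move1 x w) - ?f x)) = lam * (d2 - c)"
      using C uvpq n1 by (simp add: class_fun_def move1_def Kn_nbr_def card_Kn_nbr)
    then show ?thesis
      using sum uvpq C by (simp add: class_fun_def move1_def move2_def rec1_def rec2_def Kn_nbr_def)
  next
    case D2
    then show ?thesis using sum meet1 meet2 uvpq by (simp add: class_fun_def rec1_def rec2_def b_def algebra_simps)
  next
    case D1
    then show ?thesis using sum meet1 meet2 uvpq
      by (cases p) (simp_all add: class_fun_def rec1_def rec2_def b_def algebra_simps)
  qed
qed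

lemma coherent_targets:
  "coherent (move1 x w)" "coherent (move2 x w)" "coherent (rec1 x)" "coherent (rec2 x)"
  by (auto simp: coherent_def move1_def move2_def rec1_def rec2_def split: prod.splits)

lemma generator_to_incoherent:
  assumes "coherent x" "\<not> coherent z"
  shows "generator V nbr lam gam x z = 0"
proof -
  have "z \<noteq> move1 x w" "z \<noteq> move2 x w" "z \<noteq> rec1 x" "z \<noteq> rec2 x" "z \<noteq> x" for w
    using assms coherent_targets by metis+
  then show ?thesis by (simp add: generator_def rate_to_def split: prod.splits)
qed

lemma sum_mpow_eq:
  fixes Q :: "'s \<Rightarrow> 's \<Rightarrow> real" and f :: "nat \<Rightarrow> 's \<Rightarrow> real"
  assumes S: "finite S" "E \<subseteq> S"
    and closed: "\<And>x z. x \<in> A \<Longrightarrow> z \<in> S \<Longrightarrow> z \<notin> A \<Longrightarrow> Q x z = 0"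
    and f0: "\<And>x. x \<in> A \<Longrightarrow> f 0 x = of_bool (x \<in> E)"
    and f_Suc: "\<And>k x. x \<in> A \<Longrightarrow> (\<Sum>z\<in>S. Q x z * f k z) = f (Suc k) x"
  shows "x \<in> A \<Longrightarrow> (\<Sum>y\<in>E. mpow S Q k x y) = f k x"
proof (induction k arbitrary: x)
  case 0
  have "finite E" using S finite_subset by blast
  then show ?case using f0[OF 0] by (simp add: sum.delta)
next
  case (Suc k)
  have "(\<Sum>y\<in>E. mpow S Q (Suc k) x y) = (\<Sum>z\<in>S. Q x z * (\<Sum>y\<in>E. mpow S Q k z y))"
    by (simp add: sum_distrib_left sum.swap[of _ E])
  also have "\<dots> = (\<Sum>z\<in>S. Q x z * f k z)"
    using Suc closed by (intro sum.cong refl) (metis mult_zero_left)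
  finally show ?case using f_Suc[OF Suc.prems] by simp
qed

lemma summable_exp_series_mpow:
  fixes Q :: "'s \<Rightarrow> 's \<Rightarrow> real"
  assumes S: "finite S" and x: "x \<in> S"
  shows "summable (\<lambda>k. t ^ k / fact k * mpow S Q k x y)"
proof -
  define M where "M = (\<Sum>x\<in>S. \<Sum>z\<in>S. \<bar>Q x z\<bar>)"
  have row: "(\<Sum>z\<in>S. \<bar>Q x z\<bar>) \<le> M" if "x \<in> S" for x
    unfolding M_def using S that by (intro member_le_sum) (auto intro: sum_nonneg)
  have M0: "0 \<le> M" unfolding M_def by (intro sum_nonneg) auto
  have bound: "\<bar>mpow S Q k x y\<bar> \<le> M ^ k" if "x \<in> S" for k x
    using that
  proof (induction k arbitrary: x)
    case (Suc k)
    have "\<bar>mpow S Q (Suc k) x y\<bar> \<le> (\<Sum>z\<in>S. \<bar>Q x z\<bar> * M ^ k)"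
      using Suc by (auto simp: abs_mult intro!: order_trans[OF sum_abs] sum_mono mult_left_mono)
    also have "\<dots> \<le> M * M ^ k"
      using row[OF Suc.prems] M0 by (simp add: mult_right_mono flip: sum_distrib_right)
    finally show ?case by simp
  qed simp
  have "summable (\<lambda>k. (\<bar>t\<bar> * M) ^ k / fact k)"
    using exp_converges[of "\<bar>t\<bar> * M"] by (simp add: sums_summable divide_inverse_commute)
  then show ?thesis
  proof (rule summable_comparison_test')
    fix k
    have "norm (t ^ k / fact k * mpow S Q k x y) = \<bar>t\<bar> ^ k / fact k * \<bar>mpow S Q k x y\<bar>"
      by (simp add: abs_mult power_abs)
    also have "\<dots> \<le> (\<bar>t\<bar> * M) ^ k / fact k"
      using bound[OF x, of k] by (simp add: power_mult_distrib mult_left_mono divide_right_mono)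
    finally show "norm (t ^ k / fact k * mpow S Q k x y) \<le> (\<bar>t\<bar> * M) ^ k / fact k" .
  qed
qed

section \<open>The distribution function on the complete graph in closed form\<close>

definition hypoexp_weight :: "real \<Rightarrow> real \<Rightarrow> real \<Rightarrow> real" where
  "hypoexp_weight r s t = s * t / ((s - r) * (t - r))"

definition hypoexp_surv :: "real \<Rightarrow> real \<Rightarrow> real \<Rightarrow> real \<Rightarrow> real" where
  "hypoexp_surv r1 r2 r3 t = hypoexp_weight r1 r2 r3 * exp (- r1 * t)
     + hypoexp_weight r2 r1 r3 * exp (- r2 * t) + hypoexp_weight r3 r1 r2 * exp (- r3 * t)"

lemma hypoexp_weight_quadratic:
  assumes "r1 \<noteq> r2" "r1 \<noteq> r3" "r2 \<noteq> r3" and d: "\<And>r. d r = \<alpha> + \<beta> * r + \<gamma> * r\<^sup>2"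
  shows "hypoexp_weight r1 r2 r3 * d r1 + hypoexp_weight r2 r1 r3 * d r2 + hypoexp_weight r3 r1 r2 * d r3 = \<alpha>"
proof -
  define D where "D = (r2 - r1) * (r3 - r1) * (r3 - r2)"
  have nz: "(r2 - r1) * (r3 - r1) \<noteq> 0" "(r1 - r2) * (r3 - r2) \<noteq> 0" "(r1 - r3) * (r2 - r3) \<noteq> 0" "D \<noteq> 0"
    using assms by (auto simp: D_def)
  have w: "hypoexp_weight r1 r2 r3 = r2 * r3 * (r3 - r2) / D"
       "hypoexp_weight r2 r1 r3 = - (r1 * r3 * (r3 - r1)) / D"
       "hypoexp_weight r3 r1 r2 = r1 * r2 * (r2 - r1) / D"
    unfolding hypoexp_weight_def using nz by (subst frac_eq_eq; simp add: D_def algebra_simps)+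
  show ?thesis
    unfolding w d using nz(4) by (simp add: field_simps) (simp add: D_def algebra_simps power2_eq_square)
qed

text \<open>The characteristic polynomial \<open>det (x I - M)\<close> of the rates \<open>M\<close> of the lumped chain on the
  classes co-located, apart with both infected, apart with one infected; \<open>a\<close> is the rate of
  separating, \<open>b\<close> the rate of meeting and \<open>g\<close> the recovery rate.\<close>

definition char_poly :: "real \<Rightarrow> real \<Rightarrow> real \<Rightarrow> real \<Rightarrow> real" where
  "char_poly a b g x = (x - a) * (x - b - 2 * g) * (x - b - g) - a * b * (x - b - 3 * g)"

definition distinct_roots :: "(real \<Rightarrow> real) \<Rightarrow> real \<Rightarrow> real \<Rightarrow> real \<Rightarrow> bool" where
  "distinct_roots p r1 r2 r3 \<longleftrightarrow> r1 \<noteq> r2 \<and> r1 \<noteq> r3 \<and> r2 \<noteq> r3 \<and> p r1 = 0 \<and> p r2 = 0 \<and> p r3 = 0"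

text \<open>The two apart classes' components of an eigenvector of \<open>M\<close> for the eigenvalue \<open>r\<close>,
  normalised to \<open>1\<close> at the co-located class (the last row of \<open>M\<close> needs \<open>char_poly a b g r = 0\<close>).\<close>

definition eig_D2 :: "real \<Rightarrow> real \<Rightarrow> real" where
  "eig_D2 a r = (a - r) / a"

definition eig_D1 :: "real \<Rightarrow> real \<Rightarrow> real \<Rightarrow> real \<Rightarrow> real" where
  "eig_D1 a b g r = ((b + 2 * g - r) * (a - r) - a * b) / (2 * g * a)"

text \<open>The \<open>k\<close>-th derivative at \<open>0\<close> of \<open>t \<mapsto> 1 - (\<Sum>i. w i * d (r i) * exp (- r i * t))\<close>, where
  the \<open>w i\<close> are the weights in \<open>hypoexp_surv\<close>. For \<open>d = (\<lambda>_. 1)\<close>, \<open>eig_D2 a\<close> and \<open>eig_D1 a b g\<close>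
  these are the derivatives of the end-time distribution function started in the three classes.\<close>

definition cdf_deriv :: "real \<Rightarrow> real \<Rightarrow> real \<Rightarrow> (real \<Rightarrow> real) \<Rightarrow> nat \<Rightarrow> real" where
  "cdf_deriv r1 r2 r3 d k = of_bool (k = 0) - (hypoexp_weight r1 r2 r3 * d r1 * (- r1) ^ k
      + hypoexp_weight r2 r1 r3 * d r2 * (- r2) ^ k + hypoexp_weight r3 r1 r2 * d r3 * (- r3) ^ k)"

context
  fixes r1 r2 r3 a b g :: real
  assumes distinct: "r1 \<noteq> r2" "r1 \<noteq> r3" "r2 \<noteq> r3" and a: "a \<noteq> 0" and g: "g \<noteq> 0"
begin

lemma cdf_deriv_0:
  "cdf_deriv r1 r2 r3 (\<lambda>_. 1) 0 = 0" "cdf_deriv r1 r2 r3 (eig_D2 a) 0 = 0"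
  "cdf_deriv r1 r2 r3 (eig_D1 a b g) 0 = 0"
proof -
  have "eig_D2 a r = 1 + (- 1 / a) * r + 0 * r\<^sup>2"
       "eig_D1 a b g r = 1 + (- (a + b + 2 * g) / (2 * g * a)) * r + (1 / (2 * g * a)) * r\<^sup>2" for r
    unfolding eig_D2_def eig_D1_def using a g by (simp_all add: field_simps power2_eq_square)
  from this[THEN hypoexp_weight_quadratic[OF distinct]]
    hypoexp_weight_quadratic[OF distinct, of "\<lambda>_. 1" 1 0 0]
  show "cdf_deriv r1 r2 r3 (\<lambda>_. 1) 0 = 0" "cdf_deriv r1 r2 r3 (eig_D2 a) 0 = 0"
      "cdf_deriv r1 r2 r3 (eig_D1 a b g) 0 = 0"
    unfolding cdf_deriv_def by simp_all
qed

lemma cdf_deriv_C_Suc: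
  "cdf_deriv r1 r2 r3 (\<lambda>_. 1) (Suc k) = a * (cdf_deriv r1 r2 r3 (eig_D2 a) k - cdf_deriv r1 r2 r3 (\<lambda>_. 1) k)"
  unfolding cdf_deriv_def eig_D2_def using a by (simp add: field_simps)

lemma cdf_deriv_D2_Suc:
  "cdf_deriv r1 r2 r3 (eig_D2 a) (Suc k) =
     b * (cdf_deriv r1 r2 r3 (\<lambda>_. 1) k - cdf_deriv r1 r2 r3 (eig_D2 a) k)
   + 2 * g * (cdf_deriv r1 r2 r3 (eig_D1 a b g) k - cdf_deriv r1 r2 r3 (eig_D2 a) k)"
  unfolding cdf_deriv_def eig_D2_def eig_D1_def using a g by (simp add: field_simps)

lemma cdf_deriv_D1_Suc:
  assumes "char_poly a b g r1 = 0" "char_poly a b g r2 = 0" "char_poly a b g r3 = 0"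
  shows "cdf_deriv r1 r2 r3 (eig_D1 a b g) (Suc k) =
     b * (cdf_deriv r1 r2 r3 (\<lambda>_. 1) k - cdf_deriv r1 r2 r3 (eig_D1 a b g) k)
   + g * (of_bool (k = 0) - cdf_deriv r1 r2 r3 (eig_D1 a b g) k)"
proof -
  have root: "(b + g - r) * eig_D1 a b g r = b" if "char_poly a b g r = 0" for r
    using that a g unfolding eig_D1_def char_poly_def by (simp add: field_simps)
  let ?w1 = "hypoexp_weight r1 r2 r3" and ?w2 = "hypoexp_weight r2 r1 r3" and ?w3 = "hypoexp_weight r3 r1 r2"
  let ?e = "eig_D1 a b g"
  have "cdf_deriv r1 r2 r3 ?e (Suc k) - (b * (cdf_deriv r1 r2 r3 (\<lambda>_. 1) k - cdf_deriv r1 r2 r3 ?e k)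
      + g * (of_bool (k = 0) - cdf_deriv r1 r2 r3 ?e k))
    = ?w1 * (- r1) ^ k * (b - (b + g - r1) * ?e r1) + ?w2 * (- r2) ^ k * (b - (b + g - r2) * ?e r2)
      + ?w3 * (- r3) ^ k * (b - (b + g - r3) * ?e r3)"
    unfolding cdf_deriv_def by (simp add: algebra_simps)
  also have "\<dots> = 0" using root assms by simp
  finally show ?thesis by simp
qed

end

lemma sum_mpow_Kn_absorbed:
  fixes lam gam :: real and n v :: nat
  assumes roots: "distinct_roots (char_poly (2 * lam) (2 * lam / real (n - 1)) gam) r1 r2 r3"
    and lam: "0 < lam" and gam: "0 < gam" and n: "2 \<le> n" and v: "v < n"
  shows "(\<Sum>y\<in>{y \<in> states {..<n}. both_susceptible y}.
      mpow (states {..<n}) (generator {..<n} (Kn_nbr n) lam gam) k (v, v, True, True) y)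
    = cdf_deriv r1 r2 r3 (\<lambda>_. 1) k"
proof -
  let ?S = "states {..<n}" and ?Q = "generator {..<n} (Kn_nbr n) lam gam"
  let ?a = "2 * lam" and ?b = "2 * lam / real (n - 1)"
  define f where "f k = class_fun (of_bool (k = 0)) (cdf_deriv r1 r2 r3 (\<lambda>_. 1) k)
    (cdf_deriv r1 r2 r3 (eig_D2 ?a) k) (cdf_deriv r1 r2 r3 (eig_D1 ?a ?b gam) k)" for k
  have r: "r1 \<noteq> r2" "r1 \<noteq> r3" "r2 \<noteq> r3" "?a \<noteq> 0" "gam \<noteq> 0"
    and p: "char_poly ?a ?b gam r1 = 0" "char_poly ?a ?b gam r2 = 0" "char_poly ?a ?b gam r3 = 0"
    using roots lam gam by (auto simp: distinct_roots_def)
  have "(\<Sum>y\<in>{y \<in> ?S. both_susceptible y}. mpow ?S ?Q k (v, v, True, True) y) = f k (v, v, True, True)"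
  proof (rule sum_mpow_eq[where A = "{x \<in> ?S. coherent x}"])
    show "?Q x z = 0" if "x \<in> {x \<in> ?S. coherent x}" "z \<in> ?S" "z \<notin> {x \<in> ?S. coherent x}" for x z
      using that by (intro generator_to_incoherent) auto
    show "f 0 x = of_bool (x \<in> {y \<in> ?S. both_susceptible y})" if "x \<in> {x \<in> ?S. coherent x}" for x
      using that cdf_deriv_0[OF r] by (auto simp: f_def class_fun_def both_susceptible_def split: if_splits)
    show "(\<Sum>z\<in>?S. ?Q x z * f k z) = f (Suc k) x" if "x \<in> {x \<in> ?S. coherent x}" for k x
      unfolding f_def cdf_deriv_C_Suc[OF r] cdf_deriv_D2_Suc[OF r, where b = ?b] cdf_deriv_D1_Suc[OF r p]
      using that n by (subst generator_Kn_class_fun) simp_all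
  qed (use v in \<open>auto simp: finite_states states_def coherent_def\<close>)
  then show ?thesis by (simp add: f_def class_fun_def)
qed

lemma sums_cdf_deriv:
  "(\<lambda>k. t ^ k / fact k * cdf_deriv r1 r2 r3 (\<lambda>_. 1) k) sums (1 - hypoexp_surv r1 r2 r3 t)"
proof -
  have exp_term: "(\<lambda>k. t ^ k / fact k * (w * (- r) ^ k)) sums (w * exp (- r * t))" for w r :: real
  proof -
    have "t ^ k / fact k * (w * (- r) ^ k) = w * ((- r * t) ^ k /\<^sub>R fact k)" for k
      unfolding power_mult_distrib by (simp add: divide_inverse mult_ac)
    then show ?thesis by (simp only:) (intro sums_mult exp_converges)
  qed
  have "(\<lambda>k. t ^ k / fact k * of_bool (k = 0)) sums (1 :: real)"
    using sums_single[of 0 "\<lambda>_. 1 :: real"] by (simp add: of_bool_def if_distrib cong: if_cong)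
  then have "(\<lambda>k. t ^ k / fact k * of_bool (k = 0) - (t ^ k / fact k * (hypoexp_weight r1 r2 r3 * 1 * (- r1) ^ k)
      + t ^ k / fact k * (hypoexp_weight r2 r1 r3 * 1 * (- r2) ^ k) + t ^ k / fact k * (hypoexp_weight r3 r1 r2 * 1 * (- r3) ^ k)))
    sums (1 - (hypoexp_weight r1 r2 r3 * 1 * exp (- r1 * t) + hypoexp_weight r2 r1 r3 * 1 * exp (- r2 * t)
      + hypoexp_weight r3 r1 r2 * 1 * exp (- r3 * t)))"
    by (intro sums_diff sums_add exp_term)
  then show ?thesis
    unfolding cdf_deriv_def hypoexp_surv_def by (simp only: right_diff_distrib distrib_left mult_1_right)
qed

lemma end_time_cdf_Kn:
  fixes lam gam t :: real and n v :: nat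
  assumes roots: "distinct_roots (char_poly (2 * lam) (2 * lam / real (n - 1)) gam) r1 r2 r3"
    and lam: "0 < lam" and gam: "0 < gam" and n: "2 \<le> n" and v: "v < n" and t: "0 \<le> t"
  shows "end_time_cdf {..<n} (Kn_nbr n) lam gam (v, v, True, True) t = 1 - hypoexp_surv r1 r2 r3 t"
proof -
  let ?S = "states {..<n}" and ?Q = "generator {..<n} (Kn_nbr n) lam gam"
  let ?E = "{y \<in> states {..<n}. both_susceptible y}" and ?x = "(v, v, True, True)"
  have "?x \<in> ?S" using v by (simp add: states_def)
  then have "end_time_cdf {..<n} (Kn_nbr n) lam gam ?x t = (\<Sum>k. \<Sum>y\<in>?E. t ^ k / fact k * mpow ?S ?Q k ?x y)"
    using t suminf_sum[OF summable_exp_series_mpow[OF finite_states], where I = ?E]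
    unfolding end_time_cdf_def trans_prob_def by simp
  also have "\<dots> = (\<Sum>k. t ^ k / fact k * cdf_deriv r1 r2 r3 (\<lambda>_. 1) k)"
    by (intro suminf_cong) (simp only: sum_mpow_Kn_absorbed[OF assms(1-5)] flip: sum_distrib_left)
  also have "\<dots> = 1 - hypoexp_surv r1 r2 r3 t"
    using sums_cdf_deriv by (rule sums_unique[symmetric])
  finally show ?thesis .
qed

section \<open>Limits of rescaled hypoexponential survival functions\<close>

lemma hypoexp_weight_split: "hypoexp_weight r s t = s / (s - r) * (t / (t - r))"
  by (simp add: hypoexp_weight_def)

lemma hypoexp_surv_rescale:
  assumes "s \<noteq> 0"
  shows "hypoexp_surv (r1 / s) (r2 / s) (r3 / s) t = hypoexp_surv r1 r2 r3 (t / s)"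
proof -
  have "hypoexp_weight (x / s) (y / s) (z / s) = hypoexp_weight x y z" for x y z
    using assms unfolding hypoexp_weight_def by (simp add: field_simps flip: diff_divide_distrib)
  then show ?thesis by (simp add: hypoexp_surv_def)
qed

lemma tendsto_ratio_at_top:
  fixes f h :: "nat \<Rightarrow> real"
  assumes f: "f \<longlonglongrightarrow> L" and h: "filterlim h at_top sequentially"
  shows "(\<lambda>n. f n / (f n - h n)) \<longlonglongrightarrow> 0" "(\<lambda>n. h n / (h n - f n)) \<longlonglongrightarrow> 1"
proof -
  have q: "(\<lambda>n. f n * inverse (h n)) \<longlonglongrightarrow> L * 0"
    by (intro tendsto_mult f tendsto_inverse_0_at_top h)
  have h_pos: "eventually (\<lambda>n. h n > 0) sequentially"
    using h by (simp add: filterlim_at_top_dense)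
  have "(\<lambda>n. (f n * inverse (h n)) / (f n * inverse (h n) - 1)) \<longlonglongrightarrow> (L * 0) / (L * 0 - 1)"
    by (intro tendsto_intros q) simp
  moreover have "eventually (\<lambda>n. (f n * inverse (h n)) / (f n * inverse (h n) - 1) = f n / (f n - h n)) sequentially"
    using h_pos by eventually_elim (simp add: field_simps)
  ultimately show "(\<lambda>n. f n / (f n - h n)) \<longlonglongrightarrow> 0"
    by (simp add: Lim_transform_eventually)
  have "(\<lambda>n. 1 / (1 - f n * inverse (h n))) \<longlonglongrightarrow> 1 / (1 - L * 0)"
    by (intro tendsto_intros q) simp
  moreover have "eventually (\<lambda>n. 1 / (1 - f n * inverse (h n)) = h n / (h n - f n)) sequentially"
    using h_pos by eventually_elim (simp add: field_simps)
  ultimately show "(\<lambda>n. h n / (h n - f n)) \<longlonglongrightarrow> 1"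
    by (simp add: Lim_transform_eventually)
qed

lemma hypoexp_term_vanishes:
  fixes p q r :: "nat \<Rightarrow> real"
  assumes q: "(\<lambda>n. q n / (q n - p n)) \<longlonglongrightarrow> 0"
    and r: "eventually (\<lambda>n. \<bar>r n / (r n - p n)\<bar> \<le> B) sequentially"
    and p: "eventually (\<lambda>n. 0 \<le> p n) sequentially" and t: "0 \<le> t"
  shows "(\<lambda>n. hypoexp_weight (p n) (q n) (r n) * exp (- p n * t)) \<longlonglongrightarrow> 0"
proof (rule Lim_null_comparison)
  show "eventually (\<lambda>n. norm (hypoexp_weight (p n) (q n) (r n) * exp (- p n * t))
      \<le> \<bar>q n / (q n - p n)\<bar> * B) sequentially"
    using r p
  proof eventually_elim
    case (elim n)
    have "norm (hypoexp_weight (p n) (q n) (r n) * exp (- p n * t))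
        = \<bar>q n / (q n - p n)\<bar> * \<bar>r n / (r n - p n)\<bar> * exp (- p n * t)"
      unfolding hypoexp_weight_split by (simp add: abs_mult)
    also have "\<dots> \<le> \<bar>q n / (q n - p n)\<bar> * \<bar>r n / (r n - p n)\<bar>"
      using elim(2) t by (intro mult_right_le_one_le) simp_all
    also have "\<dots> \<le> \<bar>q n / (q n - p n)\<bar> * B"
      using elim(1) by (intro mult_left_mono) simp_all
    finally show ?case .
  qed
  show "(\<lambda>n. \<bar>q n / (q n - p n)\<bar> * B) \<longlonglongrightarrow> 0"
    using tendsto_mult[OF tendsto_rabs[OF q] tendsto_const[of B]] by simp
qed

lemma hypoexp_surv_tendsto_one_slow:
  fixes p1 p2 p3 :: "nat \<Rightarrow> real"
  assumes p1: "p1 \<longlonglongrightarrow> \<rho>" and p2: "filterlim p2 at_top sequentially"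
    and p3: "eventually (\<lambda>n. c * p2 n \<le> p3 n) sequentially" and c: "1 < c" and t: "0 \<le> t"
  shows "(\<lambda>n. hypoexp_surv (p1 n) (p2 n) (p3 n) t) \<longlonglongrightarrow> exp (- \<rho> * t)"
proof -
  have p3_top: "filterlim p3 at_top sequentially"
    using filterlim_at_top_mono[OF filterlim_tendsto_pos_mult_at_top[OF tendsto_const _ p2] p3] c
    by simp
  have "eventually (\<lambda>n. 0 < p2 n) sequentially"
    using p2 by (simp add: filterlim_at_top_dense)
  with p3 have gap: "eventually (\<lambda>n. 0 < p2 n \<and> 0 < p3 n - p2 n \<and> (c - 1) * p2 n \<le> p3 n - p2 n) sequentially"
  proof eventually_elim
    case (elim n)
    have "0 < (c - 1) * p2 n" using elim c by simp
    moreover have "(c - 1) * p2 n = c * p2 n - p2 n" by (simp add: algebra_simps)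
    ultimately show ?case using elim by linarith
  qed
  have w1: "(\<lambda>n. hypoexp_weight (p1 n) (p2 n) (p3 n)) \<longlonglongrightarrow> 1"
    using tendsto_mult[OF tendsto_ratio_at_top(2)[OF p1 p2] tendsto_ratio_at_top(2)[OF p1 p3_top]]
    by (simp add: hypoexp_weight_split)
  have "(\<lambda>n. hypoexp_weight (p2 n) (p1 n) (p3 n) * exp (- p2 n * t)) \<longlonglongrightarrow> 0"
  proof (rule hypoexp_term_vanishes[OF tendsto_ratio_at_top(1)[OF p1 p2] _ _ t])
    show "eventually (\<lambda>n. \<bar>p3 n / (p3 n - p2 n)\<bar> \<le> c / (c - 1)) sequentially"
      using gap by eventually_elim (use c in \<open>simp add: abs_of_pos field_simps\<close>)
  qed (use gap in \<open>auto elim: eventually_mono\<close>)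
  moreover have "(\<lambda>n. hypoexp_weight (p3 n) (p1 n) (p2 n) * exp (- p3 n * t)) \<longlonglongrightarrow> 0"
  proof (rule hypoexp_term_vanishes[OF tendsto_ratio_at_top(1)[OF p1 p3_top] _ _ t])
    show "eventually (\<lambda>n. \<bar>p2 n / (p2 n - p3 n)\<bar> \<le> 1 / (c - 1)) sequentially"
      using gap by eventually_elim (use c in \<open>simp add: abs_of_pos abs_minus_commute field_simps\<close>)
  qed (use gap in \<open>auto elim: eventually_mono\<close>)
  ultimately have "(\<lambda>n. hypoexp_surv (p1 n) (p2 n) (p3 n) t) \<longlonglongrightarrow> 1 * exp (- \<rho> * t) + 0 + 0"
    unfolding hypoexp_surv_def by (intro tendsto_add tendsto_mult w1 tendsto_exp tendsto_intros p1)
  then show ?thesis by simp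
qed

lemma hypoexp_surv_tendsto_one_slow_scale:
  fixes r1 r2 r3 s s2 s3 :: "nat \<Rightarrow> real"
  assumes r1: "(\<lambda>n. r1 n / s n) \<longlonglongrightarrow> 1" and r2: "(\<lambda>n. r2 n / s2 n) \<longlonglongrightarrow> 1"
    and r3: "(\<lambda>n. r3 n / s3 n) \<longlonglongrightarrow> 1" and s2: "filterlim (\<lambda>n. s2 n / s n) at_top sequentially"
    and s3: "eventually (\<lambda>n. 0 < s n \<and> 2 * s2 n \<le> s3 n) sequentially" and t: "0 \<le> t"
  shows "(\<lambda>n. hypoexp_surv (r1 n / s n) (r2 n / s n) (r3 n / s n) t) \<longlonglongrightarrow> exp (- t)"
proof -
  have s2_pos: "eventually (\<lambda>n. 0 < s2 n / s n) sequentially"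
    using s2 by (simp add: filterlim_at_top_dense)
  have r2_s: "filterlim (\<lambda>n. r2 n / s n) at_top sequentially"
  proof (rule filterlim_mono_eventually[OF filterlim_tendsto_pos_mult_at_top[OF r2 _ s2] order_refl order_refl])
    show "eventually (\<lambda>n. r2 n / s2 n * (s2 n / s n) = r2 n / s n) sequentially"
      using s2_pos by eventually_elim (auto simp: zero_less_divide_iff)
  qed simp
  have "eventually (\<lambda>n. r2 n / s2 n < 11 / 10) sequentially"
    using r2 by (rule order_tendstoD) simp
  moreover have "eventually (\<lambda>n. 9 / 10 < r3 n / s3 n) sequentially"
    using r3 by (rule order_tendstoD) simp
  ultimately have "eventually (\<lambda>n. 3 / 2 * (r2 n / s n) \<le> r3 n / s n) sequentially"
    using s3 s2_pos
  proof eventually_elim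
    case (elim n)
    then have pos: "0 < s2 n" "0 < s3 n" by (simp_all add: zero_less_divide_iff)
    with elim have "r2 n < 11 / 10 * s2 n" "9 / 10 * s3 n < r3 n" by (simp_all add: field_simps)
    with elim pos have "3 / 2 * r2 n \<le> r3 n" by linarith
    with elim show ?case by (simp add: field_simps)
  qed
  from hypoexp_surv_tendsto_one_slow[OF r1 r2_s this _ t] show ?thesis by simp
qed

lemma hypoexp_surv_tendsto_two_slow:
  fixes p1 p2 p3 :: "nat \<Rightarrow> real"
  assumes p1: "p1 \<longlonglongrightarrow> \<rho>1" and p2: "p2 \<longlonglongrightarrow> \<rho>2" and \<rho>: "\<rho>1 \<noteq> \<rho>2"
    and p3: "filterlim p3 at_top sequentially" and t: "0 \<le> t"
  shows "(\<lambda>n. hypoexp_surv (p1 n) (p2 n) (p3 n) t)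
    \<longlonglongrightarrow> (\<rho>2 * exp (- \<rho>1 * t) - \<rho>1 * exp (- \<rho>2 * t)) / (\<rho>2 - \<rho>1)"
proof -
  have w1: "(\<lambda>n. hypoexp_weight (p1 n) (p2 n) (p3 n)) \<longlonglongrightarrow> \<rho>2 / (\<rho>2 - \<rho>1) * 1"
    unfolding hypoexp_weight_split using \<rho>
    by (intro tendsto_intros p1 p2 tendsto_ratio_at_top(2)[OF p1 p3]) simp
  have w2: "(\<lambda>n. hypoexp_weight (p2 n) (p1 n) (p3 n)) \<longlonglongrightarrow> \<rho>1 / (\<rho>1 - \<rho>2) * 1"
    unfolding hypoexp_weight_split using \<rho>
    by (intro tendsto_intros p1 p2 tendsto_ratio_at_top(2)[OF p2 p3]) simp
  have "(\<lambda>n. hypoexp_weight (p3 n) (p1 n) (p2 n) * exp (- p3 n * t)) \<longlonglongrightarrow> 0"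
  proof (rule hypoexp_term_vanishes[OF tendsto_ratio_at_top(1)[OF p1 p3] _ _ t])
    show "eventually (\<lambda>n. \<bar>p2 n / (p2 n - p3 n)\<bar> \<le> 1) sequentially"
      using order_tendstoD(2)[OF tendsto_rabs[OF tendsto_ratio_at_top(1)[OF p2 p3]], of 1]
      by (auto elim: eventually_mono)
    show "eventually (\<lambda>n. 0 \<le> p3 n) sequentially"
      using p3 by (simp add: filterlim_at_top)
  qed
  with w1 w2 have "(\<lambda>n. hypoexp_surv (p1 n) (p2 n) (p3 n) t) \<longlonglongrightarrow>
      \<rho>2 / (\<rho>2 - \<rho>1) * 1 * exp (- \<rho>1 * t) + \<rho>1 / (\<rho>1 - \<rho>2) * 1 * exp (- \<rho>2 * t) + 0"
    unfolding hypoexp_surv_def by (intro tendsto_add tendsto_mult tendsto_exp tendsto_intros p1 p2)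
  moreover have "\<rho>1 / (\<rho>1 - \<rho>2) = - (\<rho>1 / (\<rho>2 - \<rho>1))"
    by (metis minus_diff_eq divide_minus_right)
  ultimately show ?thesis by (simp add: diff_divide_distrib)
qed

section \<open>Locating the roots of a family of cubics\<close>

lemma char_poly_roots_card:
  "finite {x. char_poly a b g x = 0} \<and> card {x. char_poly a b g x = 0} \<le> 3"
proof -
  define p where "p = [:- 2 * a * g\<^sup>2, (b + g) * (b + 2 * g) + a * (b + 3 * g), - (a + 2 * b + 3 * g), 1:]"
  have "char_poly a b g x = poly p x" for x
    unfolding char_poly_def p_def by (simp add: algebra_simps power2_eq_square)
  moreover have "p \<noteq> 0" "degree p = 3" by (simp_all add: p_def)
  ultimately show ?thesis using poly_roots_finite[of p] card_poly_roots_bound[of p] by simp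
qed

lemma continuous_on_char_poly: "continuous_on UNIV (char_poly a b g)"
  unfolding char_poly_def by (intro continuous_intros)

definition has_root_asymp :: "(nat \<Rightarrow> real \<Rightarrow> real) \<Rightarrow> (nat \<Rightarrow> real) \<Rightarrow> bool" where
  "has_root_asymp p s \<longleftrightarrow>
     (\<forall>\<epsilon>>0. eventually (\<lambda>n. \<exists>x. \<bar>x - s n\<bar> \<le> \<epsilon> * s n \<and> p n x = 0) sequentially)"

lemma IVT_sign_change:
  fixes f :: "real \<Rightarrow> real"
  assumes "a \<le> b" "continuous_on {a..b} f" "f a * f b < 0"
  shows "\<exists>x\<in>{a..b}. f x = 0"
proof (cases "f a < 0")
  case True
  then have "0 < f b" using assms(3) by (simp add: mult_less_0_iff)
  then show ?thesis using IVT'[of f a 0 b] True assms(1,2) by auto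
next
  case False
  then have "f b < 0" using assms(3) by (simp add: mult_less_0_iff)
  then show ?thesis using IVT2'[of f b 0 a] False assms(1,2) by auto
qed

lemma isCont_product_pos_around:
  fixes M :: "real \<Rightarrow> real"
  assumes "isCont M x" "M x \<noteq> 0" "0 < \<epsilon>"
  shows "\<exists>\<delta>. 0 < \<delta> \<and> \<delta> \<le> \<epsilon> \<and> 0 < M (x - \<delta>) * M (x + \<delta>)"
proof -
  have "0 < M x * M x" using assms(2) by (metis not_real_square_gt_zero)
  then have "eventually (\<lambda>y. 0 < M y * M x) (at x)"
    using assms(1) by (intro order_tendstoD) (auto intro!: tendsto_eq_intros simp: isCont_def)
  then obtain d where d: "0 < d" "\<And>y. y \<noteq> x \<Longrightarrow> dist y x < d \<Longrightarrow> 0 < M y * M x"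
    by (auto simp: eventually_at)
  define \<delta> where "\<delta> = min \<epsilon> (d / 2)"
  have \<delta>: "0 < \<delta>" "\<delta> \<le> \<epsilon>" using assms(3) d(1) by (auto simp: \<delta>_def)
  have "0 < M (x - \<delta>) * M x" "0 < M (x + \<delta>) * M x"
    using d(2)[of "x - \<delta>"] d(2)[of "x + \<delta>"] \<delta> d(1) by (simp_all add: dist_real_def \<delta>_def)
  then have "0 < M (x - \<delta>) * M (x + \<delta>)"
    by (auto simp: zero_less_mult_iff)
  with \<delta> show ?thesis by blast
qed

lemma has_root_asympI:
  fixes p :: "nat \<Rightarrow> real \<Rightarrow> real" and s k :: "nat \<Rightarrow> real" and M :: "real \<Rightarrow> real"
  assumes cont: "\<And>n. continuous_on UNIV (p n)"
    and lim: "\<And>y. (\<lambda>n. p n (s n * y) / k n) \<longlonglongrightarrow> (y - 1) * M y"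
    and M: "isCont M 1" "M 1 \<noteq> 0"
    and k: "eventually (\<lambda>n. 0 < k n) sequentially" and s: "eventually (\<lambda>n. 0 < s n) sequentially"
  shows "has_root_asymp p s"
  unfolding has_root_asymp_def
proof (intro allI impI)
  fix \<epsilon> :: real assume "0 < \<epsilon>"
  obtain \<delta> where \<delta>: "0 < \<delta>" "\<delta> \<le> \<epsilon>" "0 < M (1 - \<delta>) * M (1 + \<delta>)"
    using isCont_product_pos_around[OF M \<open>0 < \<epsilon>\<close>] by blast
  then have "((1 - \<delta>) - 1) * M (1 - \<delta>) * (((1 + \<delta>) - 1) * M (1 + \<delta>)) < 0"
    using \<delta> by (simp add: mult_pos_neg mult_ac)
  then have "eventually (\<lambda>n. p n (s n * (1 - \<delta>)) / k n * (p n (s n * (1 + \<delta>)) / k n) < 0) sequentially"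
    by (rule order_tendstoD(2)[OF tendsto_mult[OF lim lim]])
  then show "eventually (\<lambda>n. \<exists>x. \<bar>x - s n\<bar> \<le> \<epsilon> * s n \<and> p n x = 0) sequentially"
    using k s
  proof eventually_elim
    case (elim n)
    have "continuous_on {1 - \<delta>..1 + \<delta>} (\<lambda>y. p n (s n * y) / k n)"
      using elim(2) by (intro continuous_intros continuous_on_compose2[OF cont]) auto
    then have "\<exists>y\<in>{1 - \<delta>..1 + \<delta>}. p n (s n * y) / k n = 0"
      using \<delta>(1) by (intro IVT_sign_change elim(1)) auto
    then obtain y where y: "y \<in> {1 - \<delta>..1 + \<delta>}" "p n (s n * y) / k n = 0" ..
    have "\<bar>y - 1\<bar> \<le> \<epsilon>" using y(1) \<delta>(2) by auto
    have "s n * y - s n = s n * (y - 1)" by (simp add: algebra_simps)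
    then have "\<bar>s n * y - s n\<bar> = s n * \<bar>y - 1\<bar>"
      using elim(3) by (simp add: abs_mult)
    also have "\<dots> \<le> \<epsilon> * s n"
      using \<open>\<bar>y - 1\<bar> \<le> \<epsilon>\<close> elim(3) by (simp add: mult.commute mult_left_mono)
    finally show ?case using y(2) elim(2) by (intro exI[of _ "s n * y"]) simp
  qed
qed

lemma tendsto_ratio_unique_root:
  fixes p :: "nat \<Rightarrow> real \<Rightarrow> real" and r s :: "nat \<Rightarrow> real"
  assumes root: "has_root_asymp p s" and P: "eventually P sequentially"
    and unique: "\<And>n x. P n \<Longrightarrow> \<bar>x - s n\<bar> \<le> s n / 4 \<Longrightarrow> p n x = 0 \<Longrightarrow> x = r n"
    and pos: "\<And>n. P n \<Longrightarrow> 0 < s n"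
  shows "(\<lambda>n. r n / s n) \<longlonglongrightarrow> 1"
proof (rule tendstoI)
  fix e :: real assume "0 < e"
  define \<epsilon> where "\<epsilon> = min (e / 2) (1 / 4)"
  have "0 < \<epsilon>" "\<epsilon> < e" "\<epsilon> \<le> 1 / 4" using \<open>0 < e\<close> by (auto simp: \<epsilon>_def)
  with root have "eventually (\<lambda>n. \<exists>x. \<bar>x - s n\<bar> \<le> \<epsilon> * s n \<and> p n x = 0) sequentially"
    by (simp add: has_root_asymp_def)
  with P show "eventually (\<lambda>n. dist (r n / s n) 1 < e) sequentially"
  proof eventually_elim
    case (elim n)
    then obtain x where x: "\<bar>x - s n\<bar> \<le> \<epsilon> * s n" "p n x = 0" by blast
    have "0 < s n" using pos[OF elim(1)] .
    with \<open>\<epsilon> \<le> 1 / 4\<close> have "\<epsilon> * s n \<le> s n / 4" by simp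
    with x(1) have "\<bar>x - s n\<bar> \<le> s n / 4" by linarith
    then have "x = r n" using unique[OF elim(1) _ x(2)] by blast
    with x(1) \<open>0 < s n\<close> have "\<bar>r n - s n\<bar> / s n \<le> \<epsilon>"
      by (simp add: pos_divide_le_eq)
    moreover have "r n / s n - 1 = (r n - s n) / s n"
      using \<open>0 < s n\<close> by (simp add: diff_divide_distrib)
    ultimately show ?case using \<open>\<epsilon> < e\<close> \<open>0 < s n\<close> by (simp add: dist_real_def)
  qed
qed

text \<open>Around scales at least a factor \<open>2\<close> apart, windows of relative width \<open>1/4\<close> are disjoint;
  once each contains a root, these are all the roots of a cubic, so the root chosen in the
  \<open>i\<close>-th window is the one that \<open>has_root_asymp\<close> provides for every smaller width.\<close>

lemma roots_at_separated_scales: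
  fixes p :: "nat \<Rightarrow> real \<Rightarrow> real" and s1 s2 s3 :: "nat \<Rightarrow> real"
  assumes card: "\<And>n. finite {x. p n x = 0} \<and> card {x. p n x = 0} \<le> 3"
    and sep: "eventually (\<lambda>n. 0 < s1 n \<and> 2 * s1 n \<le> s2 n \<and> 2 * s2 n \<le> s3 n) sequentially"
    and roots: "has_root_asymp p s1" "has_root_asymp p s2" "has_root_asymp p s3"
  shows "\<exists>r1 r2 r3. eventually (\<lambda>n. distinct_roots (p n) (r1 n) (r2 n) (r3 n)) sequentially
      \<and> (\<lambda>n. r1 n / s1 n) \<longlonglongrightarrow> 1 \<and> (\<lambda>n. r2 n / s2 n) \<longlonglongrightarrow> 1 \<and> (\<lambda>n. r3 n / s3 n) \<longlonglongrightarrow> 1"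
proof -
  define near where "near s n x \<longleftrightarrow> \<bar>x - s n\<bar> \<le> s n / 4 \<and> p n x = 0" for s :: "nat \<Rightarrow> real" and n x
  define r1 where "r1 n = (SOME x. near s1 n x)" for n
  define r2 where "r2 n = (SOME x. near s2 n x)" for n
  define r3 where "r3 n = (SOME x. near s3 n x)" for n
  define good where "good n \<longleftrightarrow> 0 < s1 n \<and> 2 * s1 n \<le> s2 n \<and> 2 * s2 n \<le> s3 n
    \<and> near s1 n (r1 n) \<and> near s2 n (r2 n) \<and> near s3 n (r3 n)" for n
  have ex_near: "eventually (\<lambda>n. \<exists>x. near s n x) sequentially" if "has_root_asymp p s" for s
    using that unfolding has_root_asymp_def near_def
    by (auto elim!: allE[of _ "1/4"] elim: eventually_mono)
  have good: "eventually good sequentially"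
    using sep ex_near[OF roots(1)] ex_near[OF roots(2)] ex_near[OF roots(3)]
    by eventually_elim (auto simp: good_def r1_def r2_def r3_def intro: someI_ex)
  have all_roots: "{x. p n x = 0} = {r1 n, r2 n, r3 n}" and ordered: "r1 n < r2 n" "r2 n < r3 n"
    if "good n" for n
  proof -
    from that show "r1 n < r2 n" "r2 n < r3 n"
      unfolding good_def near_def abs_le_iff by linarith+
    then have "card {r1 n, r2 n, r3 n} = 3" by auto
    moreover have "{r1 n, r2 n, r3 n} \<subseteq> {x. p n x = 0}"
      using that by (auto simp: good_def near_def)
    ultimately show "{x. p n x = 0} = {r1 n, r2 n, r3 n}"
      using card[of n] by (metis card_subset_eq card_mono order_antisym)
  qed
  have distinct: "eventually (\<lambda>n. distinct_roots (p n) (r1 n) (r2 n) (r3 n)) sequentially"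
    using good
  proof eventually_elim
    case (elim n)
    with all_roots[OF elim] ordered[OF elim] show ?case by (auto simp: distinct_roots_def)
  qed
  have root_cases: "x = r1 n \<or> x = r2 n \<or> x = r3 n" if "good n" "p n x = 0" for n x
    using all_roots[OF that(1)] that(2) by auto
  have unique1: "x = r1 n" if "good n" "\<bar>x - s1 n\<bar> \<le> s1 n / 4" "p n x = 0" for n x
    using root_cases[OF that(1,3)] that(1,2) unfolding good_def near_def abs_le_iff
    by (elim disjE) linarith+
  have unique2: "x = r2 n" if "good n" "\<bar>x - s2 n\<bar> \<le> s2 n / 4" "p n x = 0" for n x
    using root_cases[OF that(1,3)] that(1,2) unfolding good_def near_def abs_le_iff
    by (elim disjE) linarith+
  have unique3: "x = r3 n" if "good n" "\<bar>x - s3 n\<bar> \<le> s3 n / 4" "p n x = 0" for n x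
    using root_cases[OF that(1,3)] that(1,2) unfolding good_def near_def abs_le_iff
    by (elim disjE) linarith+
  have pos: "0 < s1 n" "0 < s2 n" "0 < s3 n" if "good n" for n
    using that unfolding good_def by linarith+
  have "(\<lambda>n. r1 n / s1 n) \<longlonglongrightarrow> 1" "(\<lambda>n. r2 n / s2 n) \<longlonglongrightarrow> 1" "(\<lambda>n. r3 n / s3 n) \<longlonglongrightarrow> 1"
    by (rule tendsto_ratio_unique_root[OF roots(1) good] tendsto_ratio_unique_root[OF roots(2) good]
        tendsto_ratio_unique_root[OF roots(3) good]; auto intro: unique1 unique2 unique3 pos)+
  with distinct show ?thesis by blast
qed

lemma tendsto_char_poly_rescaled:
  fixes a b g s :: "nat \<Rightarrow> real"
  assumes "(\<lambda>n. a n / s n) \<longlonglongrightarrow> \<alpha>" "(\<lambda>n. b n / s n) \<longlonglongrightarrow> \<beta>" "(\<lambda>n. g n / s n) \<longlonglongrightarrow> \<gamma>"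
    and s: "eventually (\<lambda>n. s n \<noteq> 0) sequentially"
  shows "(\<lambda>n. char_poly (a n) (b n) (g n) (s n * y) / s n ^ 3) \<longlonglongrightarrow> char_poly \<alpha> \<beta> \<gamma> y"
proof -
  have "(\<lambda>n. char_poly (a n / s n) (b n / s n) (g n / s n) y) \<longlonglongrightarrow> char_poly \<alpha> \<beta> \<gamma> y"
    unfolding char_poly_def by (intro tendsto_intros assms)
  moreover have "eventually (\<lambda>n. char_poly (a n / s n) (b n / s n) (g n / s n) y
      = char_poly (a n) (b n) (g n) (s n * y) / s n ^ 3) sequentially"
    using s by eventually_elim (simp add: char_poly_def field_simps power3_eq_cube)
  ultimately show ?thesis by (rule Lim_transform_eventually)
qed

lemma tendsto_char_poly_rescaled_below_a:
  fixes a b g s :: "nat \<Rightarrow> real"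
  assumes "(\<lambda>n. s n / a n) \<longlonglongrightarrow> 0" "(\<lambda>n. b n / s n) \<longlonglongrightarrow> \<beta>" "(\<lambda>n. g n / s n) \<longlonglongrightarrow> \<gamma>"
    and s: "eventually (\<lambda>n. s n \<noteq> 0 \<and> a n \<noteq> 0) sequentially"
  shows "(\<lambda>n. char_poly (a n) (b n) (g n) (s n * y) / (a n * s n ^ 2))
    \<longlonglongrightarrow> - (y - \<beta> - 2 * \<gamma>) * (y - \<beta> - \<gamma>) - \<beta> * (y - \<beta> - 3 * \<gamma>)"
proof -
  let ?h = "\<lambda>n. (s n / a n * y - 1) * (y - b n / s n - 2 * (g n / s n)) * (y - b n / s n - g n / s n)
    - b n / s n * (y - b n / s n - 3 * (g n / s n))"
  have "?h \<longlonglongrightarrow> (0 * y - 1) * (y - \<beta> - 2 * \<gamma>) * (y - \<beta> - \<gamma>) - \<beta> * (y - \<beta> - 3 * \<gamma>)"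
    by (intro tendsto_intros assms)
  moreover have "eventually (\<lambda>n. ?h n = char_poly (a n) (b n) (g n) (s n * y) / (a n * s n ^ 2)) sequentially"
    using s by eventually_elim (simp add: char_poly_def field_simps power2_eq_square)
  ultimately show ?thesis by (simp add: Lim_transform_eventually)
qed

section \<open>The characteristic roots in the three regimes\<close>

lemma tendsto_inverse_pred: "(\<lambda>n. 1 / real (n - 1)) \<longlonglongrightarrow> 0"
  using LIMSEQ_offset[of "\<lambda>n. 1 / real (n - 1)" 1] lim_1_over_n by simp

lemma tendsto_ratio_pred: "(\<lambda>n. real n / real (n - 1)) \<longlonglongrightarrow> 1"
proof -
  have "(\<lambda>n. 1 + 1 / real (n - 1)) \<longlonglongrightarrow> 1 + 0"
    by (intro tendsto_add tendsto_const tendsto_inverse_pred)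
  moreover have "eventually (\<lambda>n. 1 + 1 / real (n - 1) = real n / real (n - 1)) sequentially"
    using eventually_ge_at_top[of 2] by eventually_elim (auto simp: field_simps of_nat_diff)
  ultimately show ?thesis by (simp add: Lim_transform_eventually)
qed

lemma tendsto_meeting_over_separation:
  assumes "\<And>n. lam n \<noteq> 0"
  shows "(\<lambda>n. (2 * lam n / real (n - 1)) / (2 * lam n)) \<longlonglongrightarrow> 0"
  using tendsto_inverse_pred assms by simp

lemma tendsto_meeting_over_recovery:
  assumes "(\<lambda>n. lam n / (real n * gam n)) \<longlonglongrightarrow> 0"
  shows "(\<lambda>n. (2 * lam n / real (n - 1)) / gam n) \<longlonglongrightarrow> 0"
proof -
  have "(\<lambda>n. 2 * (lam n / (real n * gam n)) * (real n / real (n - 1))) \<longlonglongrightarrow> 2 * 0 * 1"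
    by (intro tendsto_mult tendsto_const assms tendsto_ratio_pred)
  moreover have "eventually (\<lambda>n. 2 * (lam n / (real n * gam n)) * (real n / real (n - 1))
      = (2 * lam n / real (n - 1)) / gam n) sequentially"
    using eventually_ge_at_top[of 2] by eventually_elim simp
  ultimately show ?thesis by (simp add: Lim_transform_eventually)
qed

lemma fast_walk_rates:
  fixes lam gam :: "nat \<Rightarrow> real"
  assumes lam: "\<And>n. 0 < lam n" and gam: "\<And>n. 0 < gam n"
    and fast: "filterlim (\<lambda>n. lam n / (real n * gam n)) at_top sequentially"
  defines "b \<equiv> \<lambda>n. 2 * lam n / real (n - 1)" and "s \<equiv> \<lambda>n. real n * (gam n)\<^sup>2 / lam n"
  shows "(\<lambda>n. gam n / b n) \<longlonglongrightarrow> 0" and "(\<lambda>n. s n * b n / (gam n)\<^sup>2) \<longlonglongrightarrow> 2"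
    and "(\<lambda>n. s n / b n) \<longlonglongrightarrow> 0"
proof -
  have nz: "gam n \<noteq> 0" "lam n \<noteq> 0" for n using gam[of n] lam[of n] by simp_all
  have "(\<lambda>n. inverse (lam n / (real n * gam n)) * (1 / 2 * (1 - 1 / real n))) \<longlonglongrightarrow> 0 * (1 / 2 * (1 - 0))"
    by (intro tendsto_intros tendsto_inverse_0_at_top fast lim_1_over_n)
  moreover have "eventually (\<lambda>n. inverse (lam n / (real n * gam n)) * (1 / 2 * (1 - 1 / real n))
      = gam n / b n) sequentially"
    using eventually_ge_at_top[of 2] by eventually_elim (simp add: b_def of_nat_diff field_simps nz)
  ultimately show gam_b: "(\<lambda>n. gam n / b n) \<longlonglongrightarrow> 0" by (simp add: Lim_transform_eventually)
  have "(\<lambda>n. 2 * (real n / real (n - 1))) \<longlonglongrightarrow> 2 * 1" by (intro tendsto_intros tendsto_ratio_pred)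
  moreover have "eventually (\<lambda>n. 2 * (real n / real (n - 1)) = s n * b n / (gam n)\<^sup>2) sequentially"
    using eventually_ge_at_top[of 2] by eventually_elim (simp add: s_def b_def nz power2_eq_square)
  ultimately show sb: "(\<lambda>n. s n * b n / (gam n)\<^sup>2) \<longlonglongrightarrow> 2" by (simp add: Lim_transform_eventually)
  have "(\<lambda>n. s n * b n / (gam n)\<^sup>2 * (gam n / b n)\<^sup>2) \<longlonglongrightarrow> 2 * 0\<^sup>2"
    by (intro tendsto_intros sb gam_b)
  moreover have "eventually (\<lambda>n. s n * b n / (gam n)\<^sup>2 * (gam n / b n)\<^sup>2 = s n / b n) sequentially"
    using eventually_ge_at_top[of 2] by eventually_elim (simp add: b_def nz power2_eq_square field_simps)
  ultimately show "(\<lambda>n. s n / b n) \<longlonglongrightarrow> 0" by (simp add: Lim_transform_eventually)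
qed

lemma char_poly_roots_b_ll_g_ll_a:
  fixes a b g :: "nat \<Rightarrow> real"
  assumes a: "\<And>n. 0 < a n" and g: "\<And>n. 0 < g n"
    and g_a: "(\<lambda>n. g n / a n) \<longlonglongrightarrow> 0" and b_g: "(\<lambda>n. b n / g n) \<longlonglongrightarrow> 0"
  shows "has_root_asymp (\<lambda>n. char_poly (a n) (b n) (g n)) g"
    and "has_root_asymp (\<lambda>n. char_poly (a n) (b n) (g n)) (\<lambda>n. 2 * g n)"
    and "has_root_asymp (\<lambda>n. char_poly (a n) (b n) (g n)) a"
proof -
  have nz: "g n \<noteq> 0" "a n \<noteq> 0" for n using a[of n] g[of n] by simp_all
  have b_a: "(\<lambda>n. b n / a n) \<longlonglongrightarrow> 0"
    using tendsto_mult[OF b_g g_a] by (simp add: nz)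
  show "has_root_asymp (\<lambda>n. char_poly (a n) (b n) (g n)) g"
  proof (rule has_root_asympI[OF continuous_on_char_poly, where k = "\<lambda>n. a n * g n ^ 2" and M = "\<lambda>y. 2 - y"])
    show "(\<lambda>n. char_poly (a n) (b n) (g n) (g n * y) / (a n * g n ^ 2)) \<longlonglongrightarrow> (y - 1) * (2 - y)" for y
      by (rule tendsto_eq_rhs[OF tendsto_char_poly_rescaled_below_a[of g a b 0 g 1]])
        (use g_a b_g in \<open>simp_all add: nz algebra_simps\<close>)
    show "isCont (\<lambda>y :: real. 2 - y) 1" by (intro continuous_intros)
  qed (use a g in \<open>auto intro!: always_eventually mult_pos_pos simp: nz\<close>)
  show "has_root_asymp (\<lambda>n. char_poly (a n) (b n) (g n)) (\<lambda>n. 2 * g n)"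
  proof (rule has_root_asympI[OF continuous_on_char_poly, where k = "\<lambda>n. a n * (2 * g n)\<^sup>2" and M = "\<lambda>y. 1/2 - y"])
    have "(\<lambda>n. 2 * (g n / a n)) \<longlonglongrightarrow> 2 * 0" "(\<lambda>n. b n / g n / 2) \<longlonglongrightarrow> 0 / 2"
      by (intro tendsto_intros g_a b_g; simp)+
    then show "(\<lambda>n. char_poly (a n) (b n) (g n) (2 * g n * y) / (a n * (2 * g n)\<^sup>2)) \<longlonglongrightarrow> (y - 1) * (1/2 - y)" for y
      by (intro tendsto_eq_rhs[OF tendsto_char_poly_rescaled_below_a[of _ a b 0 g "1/2"]])
        (simp_all add: nz field_simps)
    show "isCont (\<lambda>y :: real. 1/2 - y) 1" by (intro continuous_intros)
  qed (use a g in \<open>auto intro!: always_eventually mult_pos_pos simp: nz\<close>)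
  show "has_root_asymp (\<lambda>n. char_poly (a n) (b n) (g n)) a"
  proof (rule has_root_asympI[OF continuous_on_char_poly, where k = "\<lambda>n. a n ^ 3" and M = "\<lambda>y. y\<^sup>2"])
    show "(\<lambda>n. char_poly (a n) (b n) (g n) (a n * y) / a n ^ 3) \<longlonglongrightarrow> (y - 1) * y\<^sup>2" for y
      by (rule tendsto_eq_rhs[OF tendsto_char_poly_rescaled[of a a 1 b 0 g 0]])
        (use b_a g_a in \<open>simp_all add: nz char_poly_def power2_eq_square\<close>)
    show "isCont (\<lambda>y :: real. y\<^sup>2) 1" by (intro continuous_intros)
  qed (use a in \<open>auto intro!: always_eventually\<close>)
qed

lemma char_poly_roots_b_ll_a_ll_g:
  fixes a b g :: "nat \<Rightarrow> real"
  assumes a: "\<And>n. 0 < a n" and g: "\<And>n. 0 < g n"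
    and a_g: "(\<lambda>n. a n / g n) \<longlonglongrightarrow> 0" and b_a: "(\<lambda>n. b n / a n) \<longlonglongrightarrow> 0"
  shows "has_root_asymp (\<lambda>n. char_poly (a n) (b n) (g n)) a"
    and "has_root_asymp (\<lambda>n. char_poly (a n) (b n) (g n)) g"
    and "has_root_asymp (\<lambda>n. char_poly (a n) (b n) (g n)) (\<lambda>n. 2 * g n)"
proof -
  have nz: "g n \<noteq> 0" "a n \<noteq> 0" for n using a[of n] g[of n] by simp_all
  have b_g: "(\<lambda>n. b n / g n) \<longlonglongrightarrow> 0"
    using tendsto_mult[OF b_a a_g] by (simp add: nz)
  show "has_root_asymp (\<lambda>n. char_poly (a n) (b n) (g n)) a"
  proof (rule has_root_asympI[OF continuous_on_char_poly, where k = "\<lambda>n. a n * (g n)\<^sup>2" and M = "\<lambda>_. 2"])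
    fix y
    let ?h = "\<lambda>n. (y - 1) * (a n / g n * y - b n / g n - 2) * (a n / g n * y - b n / g n - 1)
      - b n / g n * (a n / g n * y - b n / g n - 3)"
    have "?h \<longlonglongrightarrow> (y - 1) * (0 * y - 0 - 2) * (0 * y - 0 - 1) - 0 * (0 * y - 0 - 3)"
      by (intro tendsto_intros a_g b_g)
    moreover have "?h n = char_poly (a n) (b n) (g n) (a n * y) / (a n * (g n)\<^sup>2)" for n
      using nz[of n] by (simp add: char_poly_def field_simps power2_eq_square)
    ultimately show "(\<lambda>n. char_poly (a n) (b n) (g n) (a n * y) / (a n * (g n)\<^sup>2)) \<longlonglongrightarrow> (y - 1) * 2"
      by simp
  qed (use a g in \<open>auto intro!: always_eventually mult_pos_pos simp: nz\<close>)
  show "has_root_asymp (\<lambda>n. char_poly (a n) (b n) (g n)) g"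
  proof (rule has_root_asympI[OF continuous_on_char_poly, where k = "\<lambda>n. g n ^ 3" and M = "\<lambda>y. y * (y - 2)"])
    show "(\<lambda>n. char_poly (a n) (b n) (g n) (g n * y) / g n ^ 3) \<longlonglongrightarrow> (y - 1) * (y * (y - 2))" for y
      by (rule tendsto_eq_rhs[OF tendsto_char_poly_rescaled[of a g 0 b 0 g 1]])
        (use a_g b_g in \<open>simp_all add: nz char_poly_def algebra_simps\<close>)
    show "isCont (\<lambda>y :: real. y * (y - 2)) 1" by (intro continuous_intros)
  qed (use g in \<open>auto intro!: always_eventually\<close>)
  show "has_root_asymp (\<lambda>n. char_poly (a n) (b n) (g n)) (\<lambda>n. 2 * g n)"
  proof (rule has_root_asympI[OF continuous_on_char_poly, where k = "\<lambda>n. (2 * g n) ^ 3" and M = "\<lambda>y. y * (y - 1 / 2)"])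
    have "(\<lambda>n. a n / g n / 2) \<longlonglongrightarrow> 0 / 2" "(\<lambda>n. b n / g n / 2) \<longlonglongrightarrow> 0 / 2"
      by (intro tendsto_divide tendsto_const a_g b_g; simp)+
    then show "(\<lambda>n. char_poly (a n) (b n) (g n) (2 * g n * y) / (2 * g n) ^ 3) \<longlonglongrightarrow> (y - 1) * (y * (y - 1 / 2))" for y
      by (intro tendsto_eq_rhs[OF tendsto_char_poly_rescaled[of a _ 0 b 0 g "1/2"]])
        (simp_all add: nz char_poly_def field_simps)
    show "isCont (\<lambda>y :: real. y * (y - 1 / 2)) 1" by (intro continuous_intros)
  qed (use g in \<open>auto intro!: always_eventually\<close>)
qed

text \<open>When \<open>g \<ll> b \<ll> a\<close>, the smallest root is close to minus the ratio of the constant to the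
  linear coefficient of \<open>char_poly\<close>, which is about \<open>2 g\<^sup>2 / b\<close>; at that scale the cubic and quadratic
  terms are negligible.\<close>

lemma char_poly_slow_root:
  fixes a b g s :: "nat \<Rightarrow> real"
  assumes a: "\<And>n. 0 < a n" and g: "\<And>n. 0 < g n"
    and b: "eventually (\<lambda>n. 0 < b n) sequentially" and s: "eventually (\<lambda>n. 0 < s n) sequentially"
    and b_a: "(\<lambda>n. b n / a n) \<longlonglongrightarrow> 0" and g_b: "(\<lambda>n. g n / b n) \<longlonglongrightarrow> 0"
    and sb: "(\<lambda>n. s n * b n / (g n)\<^sup>2) \<longlonglongrightarrow> 2"
  shows "has_root_asymp (\<lambda>n. char_poly (a n) (b n) (g n)) s"
proof (rule has_root_asympI[OF continuous_on_char_poly _ _ _ _ s, where k = "\<lambda>n. 2 * a n * (g n)\<^sup>2" and M = "\<lambda>_. 1"])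
  fix y
  have nz: "g n \<noteq> 0" "a n \<noteq> 0" for n using a[of n] g[of n] by simp_all
  have "eventually (\<lambda>n. g n / b n * (b n / a n) = g n / a n) sequentially"
    using b by eventually_elim simp
  from Lim_transform_eventually[OF tendsto_mult[OF g_b b_a] this]
  have g_a: "(\<lambda>n. g n / a n) \<longlonglongrightarrow> 0" by simp
  have "eventually (\<lambda>n. s n * b n / (g n)\<^sup>2 * (g n / b n) = s n / g n) sequentially"
    using b by eventually_elim (simp add: nz power2_eq_square)
  from Lim_transform_eventually[OF tendsto_mult[OF sb g_b] this]
  have s_g: "(\<lambda>n. s n / g n) \<longlonglongrightarrow> 0" by simp
  let ?h = "\<lambda>n. (s n / g n) ^ 3 * (g n / a n) / 2 * y ^ 3
    - (s n / g n) ^ 2 * (1 + 2 * (b n / a n) + 3 * (g n / a n)) / 2 * y\<^sup>2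
    + (2 * (s n / g n) * (g n / a n) + 3 * (s n * b n / (g n)\<^sup>2) * (g n / a n)
       + s n * b n / (g n)\<^sup>2 * (b n / a n) + s n * b n / (g n)\<^sup>2 + 3 * (s n / g n)) / 2 * y - 1"
  have "?h \<longlonglongrightarrow> 0 ^ 3 * 0 / 2 * y ^ 3 - 0 ^ 2 * (1 + 2 * 0 + 3 * 0) / 2 * y\<^sup>2
      + (2 * 0 * 0 + 3 * 2 * 0 + 2 * 0 + 2 + 3 * 0) / 2 * y - 1"
    by (intro tendsto_intros s_g g_a b_a sb) simp_all
  moreover have "?h n = char_poly (a n) (b n) (g n) (s n * y) / (2 * a n * (g n)\<^sup>2)" for n
    using nz[of n] unfolding char_poly_def by (simp add: field_simps power2_eq_square power3_eq_cube)
  ultimately show "(\<lambda>n. char_poly (a n) (b n) (g n) (s n * y) / (2 * a n * (g n)\<^sup>2)) \<longlonglongrightarrow> (y - 1) * 1"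
    by simp
qed (use a g in \<open>auto intro!: always_eventually mult_pos_pos simp: less_imp_neq[symmetric]\<close>)

lemma char_poly_roots_g_ll_b_ll_a:
  fixes a b g :: "nat \<Rightarrow> real"
  assumes a: "\<And>n. 0 < a n" and b: "eventually (\<lambda>n. 0 < b n) sequentially"
    and b_a: "(\<lambda>n. b n / a n) \<longlonglongrightarrow> 0" and g_b: "(\<lambda>n. g n / b n) \<longlonglongrightarrow> 0"
  shows "has_root_asymp (\<lambda>n. char_poly (a n) (b n) (g n)) b"
    and "has_root_asymp (\<lambda>n. char_poly (a n) (b n) (g n)) a"
proof -
  have nz: "a n \<noteq> 0" for n using a[of n] by simp
  have g_a: "(\<lambda>n. g n / a n) \<longlonglongrightarrow> 0"
  proof (rule Lim_transform_eventually)
    show "(\<lambda>n. g n / b n * (b n / a n)) \<longlonglongrightarrow> 0" using tendsto_mult[OF g_b b_a] by simp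
    show "eventually (\<lambda>n. g n / b n * (b n / a n) = g n / a n) sequentially"
      using b by eventually_elim simp
  qed
  show "has_root_asymp (\<lambda>n. char_poly (a n) (b n) (g n)) b"
  proof (rule has_root_asympI[OF continuous_on_char_poly _ _ _ _ b, where k = "\<lambda>n. a n * (b n)\<^sup>2" and M = "\<lambda>y. - y"])
    have "eventually (\<lambda>n. b n / b n = 1) sequentially" using b by eventually_elim simp
    then have "(\<lambda>n. b n / b n) \<longlonglongrightarrow> 1" by (simp add: tendsto_eventually)
    then show "(\<lambda>n. char_poly (a n) (b n) (g n) (b n * y) / (a n * (b n)\<^sup>2)) \<longlonglongrightarrow> (y - 1) * - y" for y
      using b by (intro tendsto_eq_rhs[OF tendsto_char_poly_rescaled_below_a[of b a b 1 g 0]])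
        (auto simp: nz algebra_simps b_a g_b elim: eventually_mono)
    show "eventually (\<lambda>n. 0 < a n * (b n)\<^sup>2) sequentially"
      using b by eventually_elim (simp add: a)
    show "isCont (\<lambda>y :: real. - y) 1" by (intro continuous_intros)
  qed simp
  show "has_root_asymp (\<lambda>n. char_poly (a n) (b n) (g n)) a"
  proof (rule has_root_asympI[OF continuous_on_char_poly, where k = "\<lambda>n. a n ^ 3" and M = "\<lambda>y. y\<^sup>2"])
    show "(\<lambda>n. char_poly (a n) (b n) (g n) (a n * y) / a n ^ 3) \<longlonglongrightarrow> (y - 1) * y\<^sup>2" for y
      by (rule tendsto_eq_rhs[OF tendsto_char_poly_rescaled[of a a 1 b 0 g 0]])
        (use b_a g_a in \<open>simp_all add: nz char_poly_def power2_eq_square\<close>)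
    show "isCont (\<lambda>y :: real. y\<^sup>2) 1" by (intro continuous_intros)
  qed (use a in \<open>auto intro!: always_eventually\<close>)
qed

lemma char_roots_intermediate:
  fixes lam gam :: "nat \<Rightarrow> real"
  assumes lam: "\<And>n. 0 < lam n" and gam: "\<And>n. 0 < gam n"
    and fast: "filterlim (\<lambda>n. lam n / gam n) at_top sequentially"
    and sparse: "(\<lambda>n. lam n / (real n * gam n)) \<longlonglongrightarrow> 0"
  shows "\<exists>r1 r2 r3. eventually (\<lambda>n. distinct_roots
        (char_poly (2 * lam n) (2 * lam n / real (n - 1)) (gam n)) (r1 n) (r2 n) (r3 n)) sequentially
    \<and> (\<forall>t\<ge>0. (\<lambda>n. hypoexp_surv (r1 n / gam n) (r2 n / gam n) (r3 n / gam n) t)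
          \<longlonglongrightarrow> 2 * exp (- t) - exp (- 2 * t))"
proof -
  define a where "a n = 2 * lam n" for n
  define b where "b n = 2 * lam n / real (n - 1)" for n
  have a: "0 < a n" for n using lam[of n] by (simp add: a_def)
  have a_gam: "filterlim (\<lambda>n. a n / gam n) at_top sequentially"
    unfolding a_def times_divide_eq_right[symmetric]
    by (intro filterlim_tendsto_pos_mult_at_top[OF tendsto_const _ fast]) simp
  then have gam_a: "(\<lambda>n. gam n / a n) \<longlonglongrightarrow> 0"
    using tendsto_inverse_0_at_top by fastforce
  have b_gam: "(\<lambda>n. b n / gam n) \<longlonglongrightarrow> 0"
    unfolding b_def by (rule tendsto_meeting_over_recovery[OF sparse])
  have "eventually (\<lambda>n. gam n / a n < 1 / 4) sequentially"
    using gam_a by (rule order_tendstoD) simp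
  then have sep: "eventually (\<lambda>n. 0 < gam n \<and> 2 * gam n \<le> 2 * gam n \<and> 2 * (2 * gam n) \<le> a n) sequentially"
    by eventually_elim (use a gam in \<open>simp add: field_simps\<close>)
  obtain r1 r2 r3
    where roots: "eventually (\<lambda>n. distinct_roots (char_poly (a n) (b n) (gam n)) (r1 n) (r2 n) (r3 n)) sequentially"
      and r1: "(\<lambda>n. r1 n / gam n) \<longlonglongrightarrow> 1" and r2: "(\<lambda>n. r2 n / (2 * gam n)) \<longlonglongrightarrow> 1"
      and r3: "(\<lambda>n. r3 n / a n) \<longlonglongrightarrow> 1"
    using roots_at_separated_scales[OF char_poly_roots_card sep
        char_poly_roots_b_ll_g_ll_a[OF a gam gam_a b_gam]] by blast
  have r2_gam: "(\<lambda>n. r2 n / gam n) \<longlonglongrightarrow> 2"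
    using tendsto_mult[OF tendsto_const r2, of 2] gam by (simp add: less_imp_neq[symmetric])
  have r3_gam: "filterlim (\<lambda>n. r3 n / gam n) at_top sequentially"
    using filterlim_tendsto_pos_mult_at_top[OF r3 _ a_gam] a by (simp add: less_imp_neq[symmetric])
  have "(\<lambda>n. hypoexp_surv (r1 n / gam n) (r2 n / gam n) (r3 n / gam n) t) \<longlonglongrightarrow> 2 * exp (- t) - exp (- 2 * t)"
    if "0 \<le> t" for t
    using hypoexp_surv_tendsto_two_slow[OF r1 r2_gam _ r3_gam that] by simp
  with roots show ?thesis unfolding a_def b_def by blast
qed

lemma char_roots_slow_walk:
  fixes lam gam :: "nat \<Rightarrow> real"
  assumes lam: "\<And>n. 0 < lam n" and gam: "\<And>n. 0 < gam n"
    and slow: "(\<lambda>n. lam n / gam n) \<longlonglongrightarrow> 0"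
  shows "\<exists>r1 r2 r3. eventually (\<lambda>n. distinct_roots
        (char_poly (2 * lam n) (2 * lam n / real (n - 1)) (gam n)) (r1 n) (r2 n) (r3 n)) sequentially
    \<and> (\<forall>t\<ge>0. (\<lambda>n. hypoexp_surv (r1 n / (2 * lam n)) (r2 n / (2 * lam n)) (r3 n / (2 * lam n)) t)
          \<longlonglongrightarrow> exp (- t))"
proof -
  define a where "a n = 2 * lam n" for n
  define b where "b n = 2 * lam n / real (n - 1)" for n
  have a: "0 < a n" for n using lam[of n] by (simp add: a_def)
  have a_gam: "(\<lambda>n. a n / gam n) \<longlonglongrightarrow> 0"
    using tendsto_mult[OF tendsto_const slow, of 2] by (simp add: a_def)
  have gam_a: "filterlim (\<lambda>n. gam n / a n) at_top sequentially"
    using filterlim_inverse_at_top[OF a_gam] a gam by (simp add: always_eventually)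
  have b_a: "(\<lambda>n. b n / a n) \<longlonglongrightarrow> 0"
    unfolding a_def b_def by (rule tendsto_meeting_over_separation) (use lam in \<open>simp add: less_imp_neq[symmetric]\<close>)
  have "eventually (\<lambda>n. a n / gam n < 1 / 2) sequentially"
    using a_gam by (rule order_tendstoD) simp
  then have sep: "eventually (\<lambda>n. 0 < a n \<and> 2 * a n \<le> gam n \<and> 2 * gam n \<le> 2 * gam n) sequentially"
    by eventually_elim (use a gam in \<open>simp add: field_simps\<close>)
  obtain r1 r2 r3
    where roots: "eventually (\<lambda>n. distinct_roots (char_poly (a n) (b n) (gam n)) (r1 n) (r2 n) (r3 n)) sequentially"
      and r1: "(\<lambda>n. r1 n / a n) \<longlonglongrightarrow> 1" and r2: "(\<lambda>n. r2 n / gam n) \<longlonglongrightarrow> 1"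
      and r3: "(\<lambda>n. r3 n / (2 * gam n)) \<longlonglongrightarrow> 1"
    using roots_at_separated_scales[OF char_poly_roots_card sep
        char_poly_roots_b_ll_a_ll_g[OF a gam a_gam b_a]] by blast
  have "(\<lambda>n. hypoexp_surv (r1 n / a n) (r2 n / a n) (r3 n / a n) t) \<longlonglongrightarrow> exp (- t)" if "0 \<le> t" for t
    using sep by (intro hypoexp_surv_tendsto_one_slow_scale[OF r1 r2 r3 gam_a _ that]) (simp add: a)
  with roots show ?thesis unfolding a_def b_def by blast
qed

lemma char_roots_fast_walk:
  fixes lam gam :: "nat \<Rightarrow> real"
  assumes lam: "\<And>n. 0 < lam n" and gam: "\<And>n. 0 < gam n"
    and fast: "filterlim (\<lambda>n. lam n / (real n * gam n)) at_top sequentially"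
  defines "s \<equiv> \<lambda>n. real n * (gam n)\<^sup>2 / lam n"
  shows "\<exists>r1 r2 r3. eventually (\<lambda>n. distinct_roots
        (char_poly (2 * lam n) (2 * lam n / real (n - 1)) (gam n)) (r1 n) (r2 n) (r3 n)) sequentially
    \<and> (\<forall>t\<ge>0. (\<lambda>n. hypoexp_surv (r1 n / s n) (r2 n / s n) (r3 n / s n) t) \<longlonglongrightarrow> exp (- t))"
proof -
  define a where "a n = 2 * lam n" for n
  define b where "b n = 2 * lam n / real (n - 1)" for n
  have a: "0 < a n" for n using lam[of n] by (simp add: a_def)
  have nz: "gam n \<noteq> 0" "lam n \<noteq> 0" for n using gam[of n] lam[of n] by simp_all
  have b: "eventually (\<lambda>n. 0 < b n) sequentially"
    using eventually_ge_at_top[of 2] by eventually_elim (simp add: b_def lam)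
  have s: "eventually (\<lambda>n. 0 < s n) sequentially"
    using eventually_ge_at_top[of 1]
    by eventually_elim (use lam gam in \<open>auto intro!: divide_pos_pos mult_pos_pos simp: s_def nz\<close>)
  have b_a: "(\<lambda>n. b n / a n) \<longlonglongrightarrow> 0"
    unfolding a_def b_def by (rule tendsto_meeting_over_separation) (simp add: nz)
  have gam_b: "(\<lambda>n. gam n / b n) \<longlonglongrightarrow> 0" and sb: "(\<lambda>n. s n * b n / (gam n)\<^sup>2) \<longlonglongrightarrow> 2"
    and s_b: "(\<lambda>n. s n / b n) \<longlonglongrightarrow> 0"
    unfolding b_def s_def by (rule fast_walk_rates[OF lam gam fast])+
  have "eventually (\<lambda>n. s n / b n < 1 / 2) sequentially"
    using s_b by (rule order_tendstoD) simp
  then have sep: "eventually (\<lambda>n. 0 < s n \<and> 2 * s n \<le> b n \<and> 2 * b n \<le> a n) sequentially"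
    using s b eventually_ge_at_top[of 3]
  proof eventually_elim
    case (elim n)
    then have "2 \<le> real (n - 1)" by simp
    then show ?case using elim lam[of n] by (simp add: a_def b_def field_simps)
  qed
  obtain r1 r2 r3
    where roots: "eventually (\<lambda>n. distinct_roots (char_poly (a n) (b n) (gam n)) (r1 n) (r2 n) (r3 n)) sequentially"
      and r1: "(\<lambda>n. r1 n / s n) \<longlonglongrightarrow> 1" and r2: "(\<lambda>n. r2 n / b n) \<longlonglongrightarrow> 1"
      and r3: "(\<lambda>n. r3 n / a n) \<longlonglongrightarrow> 1"
    using roots_at_separated_scales[OF char_poly_roots_card sep char_poly_slow_root[OF a gam b s b_a gam_b sb]
        char_poly_roots_g_ll_b_ll_a[OF a b b_a gam_b]] by blast
  have "eventually (\<lambda>n. 0 < s n / b n) sequentially"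
    using s b by eventually_elim simp
  then have b_s: "filterlim (\<lambda>n. b n / s n) at_top sequentially"
    using filterlim_inverse_at_top[OF s_b] by simp
  have "(\<lambda>n. hypoexp_surv (r1 n / s n) (r2 n / s n) (r3 n / s n) t) \<longlonglongrightarrow> exp (- t)" if "0 \<le> t" for t
    using sep by (intro hypoexp_surv_tendsto_one_slow_scale[OF r1 r2 r3 b_s _ that]) (auto elim: eventually_mono)
  with roots show ?thesis unfolding a_def b_def by blast
qed

section \<open>Weak convergence of the rescaled end of epidemic time\<close>

lemma weak_conv_end_time_cdf_Kn:
  fixes lam gam s :: "nat \<Rightarrow> real" and v0 :: "nat \<Rightarrow> nat" and G H :: "real \<Rightarrow> real"
  assumes lam: "\<And>n. 0 < lam n" and gam: "\<And>n. 0 < gam n" and start: "\<And>n. 0 < n \<Longrightarrow> v0 n < n"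
    and roots: "\<exists>r1 r2 r3. eventually (\<lambda>n. distinct_roots
        (char_poly (2 * lam n) (2 * lam n / real (n - 1)) (gam n)) (r1 n) (r2 n) (r3 n)) sequentially
      \<and> (\<forall>t\<ge>0. (\<lambda>n. hypoexp_surv (r1 n / s n) (r2 n / s n) (r3 n / s n) t) \<longlonglongrightarrow> H t)"
    and s: "eventually (\<lambda>n. 0 < s n) sequentially"
    and G: "\<And>t. G t = (if t < 0 then 0 else 1 - H t)"
  shows "weak_conv (\<lambda>n t. end_time_cdf {..<n} (Kn_nbr n) (lam n) (gam n) (v0 n, v0 n, True, True) (t / s n)) G"
  unfolding weak_conv_def
proof (intro allI impI)
  fix t :: real
  obtain r1 r2 r3 where roots: "eventually (\<lambda>n. distinct_roots
      (char_poly (2 * lam n) (2 * lam n / real (n - 1)) (gam n)) (r1 n) (r2 n) (r3 n)) sequentially"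
    and lim: "\<And>t. 0 \<le> t \<Longrightarrow> (\<lambda>n. hypoexp_surv (r1 n / s n) (r2 n / s n) (r3 n / s n) t) \<longlonglongrightarrow> H t"
    using roots by blast
  let ?F = "\<lambda>n. end_time_cdf {..<n} (Kn_nbr n) (lam n) (gam n) (v0 n, v0 n, True, True) (t / s n)"
  show "?F \<longlonglongrightarrow> G t"
  proof (cases "t < 0")
    case True
    have "eventually (\<lambda>n. ?F n = 0) sequentially"
      using s by eventually_elim (use True in \<open>simp add: end_time_cdf_def divide_neg_pos\<close>)
    then show ?thesis using True G[of t] by (simp add: tendsto_eventually)
  next
    case False
    have "eventually (\<lambda>n. 1 - hypoexp_surv (r1 n / s n) (r2 n / s n) (r3 n / s n) t = ?F n) sequentially"
      using roots s eventually_ge_at_top[of 2]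
    proof eventually_elim
      case (elim n)
      then have "?F n = 1 - hypoexp_surv (r1 n) (r2 n) (r3 n) (t / s n)"
        using False lam gam start[of n] by (intro end_time_cdf_Kn) auto
      then show ?case using elim(2) by (simp add: hypoexp_surv_rescale)
    qed
    moreover have "(\<lambda>n. 1 - hypoexp_surv (r1 n / s n) (r2 n / s n) (r3 n / s n) t) \<longlonglongrightarrow> 1 - H t"
      using False by (intro tendsto_diff tendsto_const lim) simp
    ultimately show ?thesis using False G[of t] by (simp add: Lim_transform_eventually)
  qed
qed

theorem mainTheorem5:
  fixes lam gam :: "nat \<Rightarrow> real" and v0 :: "nat \<Rightarrow> nat"
  defines "F \<equiv> (\<lambda>n. end_time_cdf {..<n} (Kn_nbr n) (lam n) (gam n) (v0 n, v0 n, True, True))"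
  assumes lam_pos: "\<And>n. lam n > 0"
      and gam_pos: "\<And>n. gam n > 0"
      and lam_lim: "filterlim lam at_top sequentially"
      and gam_lim: "filterlim gam at_top sequentially"
      and start: "\<And>n. n > 0 \<Longrightarrow> v0 n < n"
  shows "(filterlim (\<lambda>n. lam n / (real n * gam n)) at_top sequentially \<longrightarrow>
            weak_conv (\<lambda>n t. F n (t / (real n * (gam n)\<^sup>2 / lam n)))
                      (cdf (density lborel (exponential_density 1))))
       \<and> (((\<lambda>n. lam n / gam n) \<longlonglongrightarrow> 0) \<longrightarrow>
            weak_conv (\<lambda>n t. F n (t / (2 * lam n)))
                      (cdf (density lborel (exponential_density 1))))
       \<and> ((filterlim (\<lambda>n. lam n / gam n) at_top sequentially \<and>
             ((\<lambda>n. lam n / (real n * gam n)) \<longlonglongrightarrow> 0)) \<longrightarrow>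
            weak_conv (\<lambda>n t. F n (t / gam n))
                      (cdf (density lborel (exponential_density 1) \<star>
                            density lborel (exponential_density 2))))"
  unfolding F_def
proof (intro conjI impI)
  assume fast: "filterlim (\<lambda>n. lam n / (real n * gam n)) at_top sequentially"
  have "eventually (\<lambda>n. 0 < real n * (gam n)\<^sup>2 / lam n) sequentially"
    using eventually_gt_at_top[of 0]
    by eventually_elim (intro divide_pos_pos mult_pos_pos zero_less_power lam_pos gam_pos; simp)
  with char_roots_fast_walk[OF lam_pos gam_pos fast]
  show "weak_conv (\<lambda>n t. end_time_cdf {..<n} (Kn_nbr n) (lam n) (gam n) (v0 n, v0 n, True, True)
      (t / (real n * (gam n)\<^sup>2 / lam n))) (cdf (density lborel (exponential_density 1)))"
    by (intro weak_conv_end_time_cdf_Kn[OF lam_pos gam_pos start]) (simp_all add: cdf_exponential)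
next
  assume "(\<lambda>n. lam n / gam n) \<longlonglongrightarrow> 0"
  from char_roots_slow_walk[OF lam_pos gam_pos this]
  show "weak_conv (\<lambda>n t. end_time_cdf {..<n} (Kn_nbr n) (lam n) (gam n) (v0 n, v0 n, True, True)
      (t / (2 * lam n))) (cdf (density lborel (exponential_density 1)))"
    by (intro weak_conv_end_time_cdf_Kn[OF lam_pos gam_pos start]) (simp_all add: cdf_exponential lam_pos)
next
  assume "filterlim (\<lambda>n. lam n / gam n) at_top sequentially \<and> (\<lambda>n. lam n / (real n * gam n)) \<longlonglongrightarrow> 0"
  from char_roots_intermediate[OF lam_pos gam_pos conjunct1[OF this] conjunct2[OF this]]
  show "weak_conv (\<lambda>n t. end_time_cdf {..<n} (Kn_nbr n) (lam n) (gam n) (v0 n, v0 n, True, True)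
      (t / gam n)) (cdf (density lborel (exponential_density 1) \<star> density lborel (exponential_density 2)))"
    by (intro weak_conv_end_time_cdf_Kn[OF lam_pos gam_pos start]) (simp_all add: cdf_exponential_convolution gam_pos)
qed

end
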